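(* Let $\{Q(C;\alpha)\}$ be a filtration of simplicial complexes on a finite set $C$ and fix $\alpha\ge0$. Let $G\subseteq Q(C;\alpha)$ be a graph that spans $Q(C;\alpha)$ such that the inclusion induces an isomorphism $H_1(G;\mathbb{Z}_2)\to H_1(Q(C;\alpha);\mathbb{Z}_2)$. Let $(b_i,d_i)$, $i=1,\dots,m$, be all dots (counted with multiplicity) of the persistence diagram $\mathrm{PD}\{Q(C;\alpha)\}$ with $b_i\le\alpha<d_i$. Then the total length of edges of $G$ is at least the total length of edges of $\mathrm{MST}(C;\alpha)$ plus $2\sum_{i=1}^m b_i$.
   Context: A filtration on a finite set $C$: nested finite simplicial complexes $Q(C;\alpha)$, $\alpha\ge0$, with vertex set $C$, each simplex entering at a minimal scale; final complex connected. Edge length $|e|=2\min\{\alpha:e\subset Q(C;\alpha)\}$. $\mathrm{MST}(C)$ is a minimum total length spanning tree on $C$ using filtration edges; $\mathrm{MST}(C;\alpha)$ removes all open edges of length $>2\alpha$. A graph $G$ spans a complex $Q$ on $C$ if $G$ has vertex set $C$, every edge of $G$ is in $Q$, and the inclusion induces a bijection on connected components. $\mathrm{PD}\{Q(C;\alpha)\}$ is the 1-dimensional persistence diagram (with $\mathbb{Z}_2$ coefficients) of the filtration: the multiset of (birth, death) pairs of $H_1$ classes, where a class is born at $\alpha_i$ if not in the image from any earlier scale and dies at $\alpha_j$ when its image merges into the image from scales earlier than its birth. *)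

theory Defs
  imports Complex_Main "HOL-Library.Multiset" "HOL-Library.Extended_Real"
begin

(* Simplicial complexes on vertex type 'a are sets of finite nonempty vertex sets.
   A filtration is given by its final complex S together with the entry scale
   ent sigma of each simplex; Q(C;alpha) = {sigma in S. ent sigma <= alpha}. *)

definition Qle :: "'a set set \<Rightarrow> ('a set \<Rightarrow> real) \<Rightarrow> real \<Rightarrow> 'a set set" where
  "Qle S ent a = {\<sigma>\<in>S. ent \<sigma> \<le> a}"

definition Qlt :: "'a set set \<Rightarrow> ('a set \<Rightarrow> real) \<Rightarrow> real \<Rightarrow> 'a set set" where
  "Qlt S ent a = {\<sigma>\<in>S. ent \<sigma> < a}"

definition edges :: "'a set set \<Rightarrow> 'a set set" where
  "edges K = {\<sigma>\<in>K. card \<sigma> = 2}"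

definition triangles :: "'a set set \<Rightarrow> 'a set set" where
  "triangles K = {\<sigma>\<in>K. card \<sigma> = 3}"

definition conn :: "'a set set \<Rightarrow> 'a \<Rightarrow> 'a \<Rightarrow> bool" where
  "conn E = (\<lambda>x y. {x, y} \<in> E)\<^sup>*\<^sup>*"

definition connected_graph :: "'a set \<Rightarrow> 'a set set \<Rightarrow> bool" where
  "connected_graph V E \<longleftrightarrow> (\<forall>u\<in>V. \<forall>v\<in>V. conn E u v)"

definition comp :: "'a set \<Rightarrow> 'a set set \<Rightarrow> 'a \<Rightarrow> 'a set" where
  "comp V E u = {v\<in>V. conn E u v}"

definition comps :: "'a set \<Rightarrow> 'a set set \<Rightarrow> 'a set set" where
  "comps V E = comp V E ` V"

definition filtration :: "'a set \<Rightarrow> 'a set set \<Rightarrow> ('a set \<Rightarrow> real) \<Rightarrow> bool" where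
  "filtration C S ent \<longleftrightarrow>
     finite C \<and>
     (\<forall>\<sigma>\<in>S. \<sigma> \<noteq> {} \<and> \<sigma> \<subseteq> C) \<and>
     (\<forall>v\<in>C. {v} \<in> S \<and> ent {v} = 0) \<and>
     (\<forall>\<sigma>\<in>S. \<forall>\<tau>. \<tau> \<noteq> {} \<and> \<tau> \<subseteq> \<sigma> \<longrightarrow> \<tau> \<in> S \<and> ent \<tau> \<le> ent \<sigma>) \<and>
     (\<forall>\<sigma>\<in>S. 0 \<le> ent \<sigma>) \<and>
     connected_graph C (edges S)"

(* Z_2 chains are sets of simplices; addition is symmetric difference *)
definition symdiff :: "'b set \<Rightarrow> 'b set \<Rightarrow> 'b set" where
  "symdiff A B = (A - B) \<union> (B - A)"

definition cycles :: "'a set set \<Rightarrow> 'a set set set" where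
  "cycles K = {c. c \<subseteq> edges K \<and> (\<forall>v. even (card {e\<in>c. v \<in> e}))}"

definition bd2 :: "'a set set \<Rightarrow> 'a set set" where
  "bd2 T = {e. card e = 2 \<and> odd (card {t\<in>T. e \<subseteq> t})}"

definition boundaries :: "'a set set \<Rightarrow> 'a set set set" where
  "boundaries K = bd2 ` Pow (triangles K)"

definition hclass :: "'a set set \<Rightarrow> 'a set set \<Rightarrow> 'a set set set" where
  "hclass K c = {c'\<in>cycles K. symdiff c c' \<in> boundaries K}"

definition H1 :: "'a set set \<Rightarrow> 'a set set set set" where
  "H1 K = hclass K ` cycles K"

(* map H_1(K) -> H_1(L) induced by inclusion K \<subseteq> L *)
definition induced :: "'a set set \<Rightarrow> 'a set set \<Rightarrow> 'a set set set \<Rightarrow> 'a set set set" where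
  "induced K L X = hclass L (SOME z. z \<in> X)"

definition dimZ2 :: "'b set \<Rightarrow> nat" where
  "dimZ2 V = (THE n. card V = 2 ^ n)"

definition hrank :: "'a set set \<Rightarrow> 'a set set \<Rightarrow> nat" where
  "hrank K L = dimZ2 (induced K L ` H1 K)"

(* multiplicity of the dot (b,d), b<d finite, in the 1-dim persistence diagram *)
definition mult_fin :: "'a set set \<Rightarrow> ('a set \<Rightarrow> real) \<Rightarrow> real \<Rightarrow> real \<Rightarrow> nat" where
  "mult_fin S ent b d = nat (int (hrank (Qle S ent b) (Qlt S ent d))
      - int (hrank (Qlt S ent b) (Qlt S ent d))
      - int (hrank (Qle S ent b) (Qle S ent d))
      + int (hrank (Qlt S ent b) (Qle S ent d)))"

(* multiplicity of the dot (b,infinity): classes born at b never dying *)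
definition mult_inf :: "'a set set \<Rightarrow> ('a set \<Rightarrow> real) \<Rightarrow> real \<Rightarrow> nat" where
  "mult_inf S ent b = nat (int (hrank (Qle S ent b) S) - int (hrank (Qlt S ent b) S))"

(* PD{Q(C;alpha)}: births/deaths can only occur at entry scales ent ` S *)
definition PD :: "'a set set \<Rightarrow> ('a set \<Rightarrow> real) \<Rightarrow> (real \<times> ereal) multiset" where
  "PD S ent =
     (\<Sum>b\<in>ent ` S. \<Sum>d\<in>ent ` S.
        if b < d then replicate_mset (mult_fin S ent b d) (b, ereal d) else {#})
   + (\<Sum>b\<in>ent ` S. replicate_mset (mult_inf S ent b) (b, \<infinity>))"

definition graph_on :: "'a set \<Rightarrow> 'a set set \<Rightarrow> bool" where
  "graph_on C G \<longleftrightarrow> (\<forall>e\<in>G. card e = 2 \<and> e \<subseteq> C)"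

definition graph_cx :: "'a set \<Rightarrow> 'a set set \<Rightarrow> 'a set set" where
  "graph_cx C G = (\<lambda>v. {v}) ` C \<union> G"

definition spans :: "'a set \<Rightarrow> 'a set set \<Rightarrow> 'a set set \<Rightarrow> bool" where
  "spans C G K \<longleftrightarrow> graph_on C G \<and> G \<subseteq> K \<and>
     bij_betw (\<lambda>X. comp C (edges K) (SOME v. v \<in> X)) (comps C G) (comps C (edges K))"

definition is_tree :: "'a set \<Rightarrow> 'a set set \<Rightarrow> bool" where
  "is_tree C T \<longleftrightarrow> graph_on C T \<and> connected_graph C T \<and>
     (\<forall>e\<in>T. \<forall>u v. e = {u, v} \<longrightarrow> \<not> conn (T - {e}) u v)"

definition elen :: "('a set \<Rightarrow> real) \<Rightarrow> 'a set \<Rightarrow> real" where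
  "elen ent e = 2 * ent e"

definition total_len :: "('a set \<Rightarrow> real) \<Rightarrow> 'a set set \<Rightarrow> real" where
  "total_len ent E = (\<Sum>e\<in>E. elen ent e)"

definition is_MST :: "'a set \<Rightarrow> 'a set set \<Rightarrow> ('a set \<Rightarrow> real) \<Rightarrow> 'a set set \<Rightarrow> bool" where
  "is_MST C S ent T \<longleftrightarrow> is_tree C T \<and> T \<subseteq> edges S \<and>
     (\<forall>T'. is_tree C T' \<and> T' \<subseteq> edges S \<longrightarrow> total_len ent T \<le> total_len ent T')"

definition MST_trunc :: "('a set \<Rightarrow> real) \<Rightarrow> 'a set set \<Rightarrow> real \<Rightarrow> 'a set set" where
  "MST_trunc ent T a = {e\<in>T. elen ent e \<le> 2 * a}"

end

theory Submission
  imports Defs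
begin

text \<open>Fix a level $t < \alpha$. By Euler's formula, the edges of $G$ longer than $2t$ number at least
  the drop of the rank of $H_1(Q(C;t)) \to H_1(Q(C;\alpha))$ plus the drop in the number of
  components of $Q$ between the scales $t$ and $\alpha$, because the cycles of the edges of $G$
  entering by scale $t$ inject into $H_1(G) \cong H_1(Q(C;\alpha))$. The first drop is the number of
  dots with $t < b_i \le \alpha < d_i$, since each persistence multiplicity is an alternating sum of
  ranks that telescopes; the second is the number of edges of $\mathrm{MST}(C;\alpha)$ longer than
  $2t$, by the cut property of minimum spanning trees. So at every level $t$ the lengths of $G$
  dominate those of $\mathrm{MST}(C;\alpha)$ together with the births $b_i$, and a layer-cake
  argument turns these counts into the inequality of sums.\<close>

section \<open>Subspaces of the $\mathbb{Z}_2$-vector space of sets\<close>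

lemma mem_symdiff: "x \<in> symdiff A B \<longleftrightarrow> (x \<in> A) \<noteq> (x \<in> B)"
  unfolding symdiff_def by blast

lemma symdiff_assoc: "symdiff (symdiff x y) z = symdiff x (symdiff y z)"
  unfolding symdiff_def by blast

lemma symdiff_self [simp]: "symdiff x x = {}"
  unfolding symdiff_def by blast

lemma symdiff_empty [simp]: "symdiff x {} = x" "symdiff {} x = x"
  unfolding symdiff_def by blast+

lemma symdiff_cancel [simp]: "symdiff x (symdiff x y) = y" "symdiff (symdiff y x) x = y"
  unfolding symdiff_def by blast+

lemma symdiff_eq_iff: "symdiff x y = z \<longleftrightarrow> y = symdiff x z"
  unfolding symdiff_def by blast

lemma inj_on_symdiff: "inj_on (symdiff x) A"
  by (rule inj_onI) (simp add: symdiff_eq_iff)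

definition z2_subspace :: "'b set set \<Rightarrow> bool" where
  "z2_subspace U \<longleftrightarrow> {} \<in> U \<and> (\<forall>x\<in>U. \<forall>y\<in>U. symdiff x y \<in> U)"

definition z2_sum :: "'b set set \<Rightarrow> 'b set set \<Rightarrow> 'b set set" where
  "z2_sum U W = {symdiff u w | u w. u \<in> U \<and> w \<in> W}"

definition coset :: "'b set set \<Rightarrow> 'b set \<Rightarrow> 'b set set" where
  "coset B c = symdiff c ` B"

lemma z2_subspace_empty: "z2_subspace U \<Longrightarrow> {} \<in> U"
  and z2_subspace_symdiff: "z2_subspace U \<Longrightarrow> x \<in> U \<Longrightarrow> y \<in> U \<Longrightarrow> symdiff x y \<in> U"
  unfolding z2_subspace_def by auto

lemma z2_subspace_Int: "z2_subspace U \<Longrightarrow> z2_subspace W \<Longrightarrow> z2_subspace (U \<inter> W)"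
  unfolding z2_subspace_def by auto

lemma z2_sum_eq_image: "z2_sum U W = (\<lambda>(u, w). symdiff u w) ` (U \<times> W)"
  unfolding z2_sum_def by force

lemma finite_z2_sum: "finite U \<Longrightarrow> finite W \<Longrightarrow> finite (z2_sum U W)"
  unfolding z2_sum_eq_image by simp

lemma z2_subspace_sum:
  assumes "z2_subspace U" "z2_subspace W"
  shows "z2_subspace (z2_sum U W)"
  unfolding z2_subspace_def z2_sum_def
proof (intro conjI ballI)
  show "{} \<in> {symdiff u w |u w. u \<in> U \<and> w \<in> W}"
    using assms by (auto intro!: exI[of _ "{}"] z2_subspace_empty)
next
  fix x y assume "x \<in> {symdiff u w |u w. u \<in> U \<and> w \<in> W}" "y \<in> {symdiff u w |u w. u \<in> U \<and> w \<in> W}"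
  then obtain u1 w1 u2 w2 where "x = symdiff u1 w1" "y = symdiff u2 w2" "u1 \<in> U" "u2 \<in> U" "w1 \<in> W" "w2 \<in> W"
    by blast
  moreover have "symdiff (symdiff u1 w1) (symdiff u2 w2) = symdiff (symdiff u1 u2) (symdiff w1 w2)"
    unfolding symdiff_def by blast
  ultimately show "symdiff x y \<in> {symdiff u w |u w. u \<in> U \<and> w \<in> W}"
    using z2_subspace_symdiff[OF assms(1)] z2_subspace_symdiff[OF assms(2)] by blast
qed

lemma z2_sum_mono: "U \<subseteq> U' \<Longrightarrow> W \<subseteq> W' \<Longrightarrow> z2_sum U W \<subseteq> z2_sum U' W'"
  unfolding z2_sum_def by blast

lemma z2_sum_upper2: "{} \<in> U \<Longrightarrow> W \<subseteq> z2_sum U W"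
  unfolding z2_sum_def by force

lemma symdiff_image_subspace:
  assumes "z2_subspace B" "b \<in> B"
  shows "symdiff b ` B = B"
proof
  show "symdiff b ` B \<subseteq> B"
    using z2_subspace_symdiff[OF assms] by blast
  show "B \<subseteq> symdiff b ` B"
  proof
    fix x assume "x \<in> B"
    then show "x \<in> symdiff b ` B"
      using z2_subspace_symdiff[OF assms] by (intro image_eqI[of _ _ "symdiff b x"]) auto
  qed
qed

lemma coset_shift:
  assumes "z2_subspace B" "b \<in> B"
  shows "coset B (symdiff c b) = coset B c"
proof -
  have "coset B (symdiff c b) = symdiff c ` (symdiff b ` B)"
    unfolding coset_def image_image by (simp add: symdiff_assoc)
  then show ?thesis
    unfolding symdiff_image_subspace[OF assms] coset_def .
qed

lemma z2_subspace_avoiding: "z2_subspace U \<Longrightarrow> z2_subspace {u\<in>U. a \<notin> u}"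
  unfolding z2_subspace_def by (auto simp: mem_symdiff)

text \<open>Translation by $x$ swaps the sets of $U$ that avoid $a \in x$ with those that contain it.\<close>

lemma card_z2_subspace_split:
  assumes "z2_subspace U" "finite U" "x \<in> U" "a \<in> x"
  shows "card U = 2 * card {u\<in>U. a \<notin> u}"
proof -
  define U0 where "U0 = {u\<in>U. a \<notin> u}"
  have "U = U0 \<union> symdiff x ` U0"
  proof
    show "U \<subseteq> U0 \<union> symdiff x ` U0"
    proof
      fix u assume u: "u \<in> U"
      show "u \<in> U0 \<union> symdiff x ` U0"
      proof (cases "a \<in> u")
        case True
        then have "symdiff x u \<in> U0"
          using z2_subspace_symdiff[OF assms(1,3) u] assms(4) unfolding U0_def by (auto simp: mem_symdiff)
        then show ?thesis
          by (intro UnI2 image_eqI[of _ _ "symdiff x u"]) auto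
      next
        case False
        then show ?thesis
          using u by (simp add: U0_def)
      qed
    qed
    show "U0 \<union> symdiff x ` U0 \<subseteq> U"
      using z2_subspace_symdiff[OF assms(1,3)] unfolding U0_def by blast
  qed
  moreover have "U0 \<inter> symdiff x ` U0 = {}"
    using assms(4) unfolding U0_def by (auto simp: mem_symdiff)
  ultimately have "card U = card U0 + card (symdiff x ` U0)"
    using assms(2) by (metis card_Un_disjoint finite_Un)
  then show ?thesis
    using card_image[OF inj_on_symdiff[of x U0]] unfolding U0_def by simp
qed

lemma z2_subspace_card_pow2:
  assumes "z2_subspace U" "finite U"
  shows "\<exists>n. card U = 2 ^ n"
  using assms
proof (induction "card U" arbitrary: U rule: less_induct)
  case less
  show ?case
  proof (cases "U \<subseteq> {{}}")
    case True
    then have "U = {{}}"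
      using z2_subspace_empty[OF less.prems(1)] by blast
    then show ?thesis
      by (intro exI[of _ 0]) simp
  next
    case False
    then obtain x a where x: "x \<in> U" "a \<in> x"
      by blast
    have "card {u\<in>U. a \<notin> u} < card U"
      using x less.prems(2) by (intro psubset_card_mono) auto
    then obtain n where "card {u\<in>U. a \<notin> u} = 2 ^ n"
      using less.hyps[OF _ z2_subspace_avoiding[OF less.prems(1)]] less.prems(2) by auto
    then have "card U = 2 ^ Suc n"
      using card_z2_subspace_split[OF less.prems x] by simp
    then show ?thesis ..
  qed
qed

lemma dimZ2_eq: "card U = 2 ^ n \<Longrightarrow> dimZ2 U = n"
  unfolding dimZ2_def by (rule the_equality) (auto simp: power_inject_exp)

lemma card_z2_subspace: "z2_subspace U \<Longrightarrow> finite U \<Longrightarrow> card U = 2 ^ dimZ2 U"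
  using z2_subspace_card_pow2 dimZ2_eq by metis

lemma dimZ2_mono:
  assumes "z2_subspace U" "z2_subspace W" "U \<subseteq> W" "finite W"
  shows "dimZ2 U \<le> dimZ2 W"
proof -
  have "card U \<le> card W"
    by (rule card_mono[OF assms(4,3)])
  then have "(2::nat) ^ dimZ2 U \<le> 2 ^ dimZ2 W"
    using card_z2_subspace assms finite_subset by metis
  then show ?thesis
    by simp
qed

lemma card_z2_sum_fiber:
  assumes "z2_subspace U" "z2_subspace W" "s \<in> z2_sum U W"
  shows "card {p\<in>U \<times> W. symdiff (fst p) (snd p) = s} = card (U \<inter> W)"
proof -
  define fib where "fib = {p\<in>U \<times> W. symdiff (fst p) (snd p) = s}"
  obtain u0 w0 where uw: "u0 \<in> U" "w0 \<in> W" "s = symdiff u0 w0"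
    using assms(3) unfolding z2_sum_def by blast
  have "bij_betw (\<lambda>i. (symdiff u0 i, symdiff w0 i)) (U \<inter> W) fib"
  proof (rule bij_betw_byWitness[where f' = "\<lambda>p. symdiff u0 (fst p)"])
    show "\<forall>i\<in>U \<inter> W. symdiff u0 (fst (symdiff u0 i, symdiff w0 i)) = i"
      by simp
    show "\<forall>p\<in>fib. (symdiff u0 (symdiff u0 (fst p)), symdiff w0 (symdiff u0 (fst p))) = p"
      unfolding fib_def uw by (auto simp: prod_eq_iff symdiff_def)
    show "(\<lambda>i. (symdiff u0 i, symdiff w0 i)) ` (U \<inter> W) \<subseteq> fib"
      using uw z2_subspace_symdiff[OF assms(1)] z2_subspace_symdiff[OF assms(2)]
      unfolding fib_def by (auto simp: symdiff_def)
    show "(\<lambda>p. symdiff u0 (fst p)) ` fib \<subseteq> U \<inter> W"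
    proof clarify
      fix p q assume p: "(p, q) \<in> fib"
      then have "symdiff u0 p = symdiff w0 q"
        unfolding fib_def uw by (auto simp: symdiff_def)
      then show "symdiff u0 (fst (p, q)) \<in> U \<inter> W"
        using p uw z2_subspace_symdiff[OF assms(1)] z2_subspace_symdiff[OF assms(2)]
        unfolding fib_def by (metis (mono_tags, lifting) IntI SigmaE fst_conv mem_Collect_eq snd_conv)
    qed
  qed
  from bij_betw_same_card[OF this] show ?thesis
    unfolding fib_def by simp
qed

lemma card_z2_sum_mult_card_Int:
  assumes "z2_subspace U" "z2_subspace W" "finite U" "finite W"
  shows "card (z2_sum U W) * card (U \<inter> W) = card U * card W"
proof -
  define fib where "fib s = {p\<in>U \<times> W. symdiff (fst p) (snd p) = s}" for s
  have cover: "\<Union>(fib ` z2_sum U W) = U \<times> W"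
    unfolding fib_def z2_sum_def by force
  have "inj_on fib (z2_sum U W)"
  proof (rule inj_onI)
    fix s s' assume "s \<in> z2_sum U W" "fib s = fib s'"
    then obtain u0 w0 where "u0 \<in> U" "w0 \<in> W" "s = symdiff u0 w0"
      unfolding z2_sum_def by blast
    then have "(u0, w0) \<in> fib s'"
      using \<open>fib s = fib s'\<close> unfolding fib_def by auto
    then show "s = s'"
      using \<open>s = symdiff u0 w0\<close> unfolding fib_def by auto
  qed
  moreover have "card (U \<inter> W) * card (fib ` z2_sum U W) = card (\<Union>(fib ` z2_sum U W))"
  proof (rule card_partition)
    show "finite (fib ` z2_sum U W)"
      using finite_z2_sum[OF assms(3,4)] by simp
    show "finite (\<Union> (fib ` z2_sum U W))"
      unfolding cover using assms(3,4) by simp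
  qed (use card_z2_sum_fiber[OF assms(1,2)] fib_def in auto)
  ultimately show ?thesis
    unfolding cover card_cartesian_product by (simp add: card_image mult.commute)
qed

lemma dimZ2_sum_Int:
  assumes "z2_subspace U" "z2_subspace W" "finite U" "finite W"
  shows "dimZ2 (z2_sum U W) + dimZ2 (U \<inter> W) = dimZ2 U + dimZ2 W"
proof -
  have "(2::nat) ^ dimZ2 (z2_sum U W) * 2 ^ dimZ2 (U \<inter> W) = 2 ^ dimZ2 U * 2 ^ dimZ2 W"
    using card_z2_sum_mult_card_Int[OF assms]
      card_z2_subspace[OF z2_subspace_sum[OF assms(1,2)] finite_z2_sum[OF assms(3,4)]]
      card_z2_subspace[OF z2_subspace_Int[OF assms(1,2)]] card_z2_subspace[OF assms(1,3)]
      card_z2_subspace[OF assms(2,4)] assms(3)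
    by simp
  then show ?thesis
    by (simp add: power_add[symmetric] power_inject_exp)
qed

lemma card_cosets:
  assumes "z2_subspace B" "finite A" "finite B"
  shows "card (coset B ` A) * card B = card (z2_sum A B)"
proof -
  have union: "\<Union>(coset B ` A) = z2_sum A B"
    unfolding coset_def z2_sum_def by blast
  have "card B * card (coset B ` A) = card (\<Union>(coset B ` A))"
  proof (rule card_partition)
    show "finite (coset B ` A)" "finite (\<Union>(coset B ` A))"
      using assms(2,3) unfolding union by (auto intro: finite_z2_sum)
    show "card c = card B" if "c \<in> coset B ` A" for c
      using that unfolding coset_def by (auto intro: card_image inj_on_symdiff)
    show "c1 \<inter> c2 = {}" if c: "c1 \<in> coset B ` A" "c2 \<in> coset B ` A" "c1 \<noteq> c2" for c1 c2
    proof (rule ccontr)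
      obtain a1 a2 where a: "c1 = coset B a1" "c2 = coset B a2"
        using c(1,2) by blast
      assume "c1 \<inter> c2 \<noteq> {}"
      then obtain b1 b2 where b: "b1 \<in> B" "b2 \<in> B" "symdiff a1 b1 = symdiff a2 b2"
        unfolding a coset_def by auto
      then have "a2 = symdiff a1 (symdiff b1 b2)"
        unfolding symdiff_def by blast
      then have "c2 = c1"
        unfolding a using coset_shift[OF assms(1) z2_subspace_symdiff[OF assms(1) b(1,2)]] by simp
      then show False
        using c(3) by simp
    qed
  qed
  then show ?thesis
    using union by (simp add: mult.commute)
qed


section \<open>Connectivity, components and the cycle space of a graph\<close>

lemma conn_refl [simp]: "conn E x x"
  unfolding conn_def by simp

lemma conn_edge: "{x, y} \<in> E \<Longrightarrow> conn E x y"
  unfolding conn_def by auto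

lemma conn_trans: "conn E x y \<Longrightarrow> conn E y z \<Longrightarrow> conn E x z"
  unfolding conn_def by (rule rtranclp_trans)

lemma conn_induct [consumes 1, case_names base step]:
  assumes "conn E x y" "P x" "\<And>y z. conn E x y \<Longrightarrow> {y, z} \<in> E \<Longrightarrow> P y \<Longrightarrow> P z"
  shows "P y"
  using assms(1) unfolding conn_def
  by (induction rule: rtranclp_induct) (use assms(2,3) in \<open>auto simp: conn_def\<close>)

lemma conn_sym: "conn E x y \<Longrightarrow> conn E y x"
proof (induction rule: conn_induct)
  case (step y z)
  then show ?case
    using conn_trans[OF conn_edge[of z y E]] by (simp add: insert_commute)
qed simp

lemma conn_mono_edges:
  assumes "\<And>a b. {a, b} \<in> E \<Longrightarrow> conn F a b" "conn E x y"
  shows "conn F x y"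
  using assms(2)
proof (induction rule: conn_induct)
  case (step y z)
  then show ?case
    using conn_trans[OF _ assms(1)] by blast
qed simp

lemma conn_mono: "E \<subseteq> F \<Longrightarrow> conn E x y \<Longrightarrow> conn F x y"
  by (rule conn_mono_edges) (auto intro: conn_edge)

lemma conn_empty: "conn {} x y \<longleftrightarrow> x = y"
proof
  assume "conn {} x y"
  then show "x = y"
    by (induction rule: conn_induct) auto
qed simp

lemma conn_insert:
  "conn (insert {u, v} E) x y \<longleftrightarrow>
     conn E x y \<or> (conn E x u \<and> conn E v y) \<or> (conn E x v \<and> conn E u y)"
proof
  assume "conn (insert {u, v} E) x y"
  then show "conn E x y \<or> (conn E x u \<and> conn E v y) \<or> (conn E x v \<and> conn E u y)"
  proof (induction rule: conn_induct)
    case (step y z)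
    show ?case
    proof (cases "{y, z} \<in> E")
      case True
      then show ?thesis
        using step(3) conn_trans[OF _ conn_edge[OF True]] by blast
    next
      case False
      then have "(y = u \<and> z = v) \<or> (y = v \<and> z = u)"
        using step(2) by (simp add: doubleton_eq_iff)
      then show ?thesis
        using step(3) by auto
    qed
  qed simp
next
  have E: "conn E a b \<Longrightarrow> conn (insert {u, v} E) a b" for a b
    by (rule conn_mono[of E]) auto
  have "conn (insert {u, v} E) u v" "conn (insert {u, v} E) v u"
    by (auto intro: conn_edge simp: insert_commute)
  then show "conn E x y \<or> (conn E x u \<and> conn E v y) \<or> (conn E x v \<and> conn E u y) \<Longrightarrow>
      conn (insert {u, v} E) x y"
    using E conn_trans[of "insert {u, v} E"] by blast
qed

lemma conn_insert_conn:
  assumes "conn E u v"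
  shows "conn (insert {u, v} E) = conn E"
proof (intro ext iffI)
  fix x y
  show "conn (insert {u, v} E) x y \<Longrightarrow> conn E x y"
    unfolding conn_insert using conn_trans[OF conn_trans[OF _ assms]] conn_trans[OF conn_trans[OF _ conn_sym[OF assms]]] by blast
  show "conn E x y \<Longrightarrow> conn (insert {u, v} E) x y"
    unfolding conn_insert by blast
qed

lemma comp_eq_if_conn:
  assumes "conn E u v"
  shows "comp C E u = comp C E v"
  using conn_trans[OF assms] conn_trans[OF conn_sym[OF assms]] unfolding comp_def by blast

lemma finite_comps: "finite C \<Longrightarrow> finite (comps C E)"
  unfolding comps_def by simp

lemma card_comps_empty: "card (comps C {}) = card C"
proof -
  have "comps C {} = (\<lambda>u. {u}) ` C"
    unfolding comps_def comp_def conn_empty by auto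
  then show ?thesis
    by (simp add: card_image)
qed

lemma comps_eq_image:
  assumes "\<And>a b. {a, b} \<in> E1 \<Longrightarrow> conn E2 a b"
  shows "comps C E2 = (\<lambda>X. comp C E2 (SOME v. v \<in> X)) ` comps C E1"
proof -
  have "comp C E2 (SOME v. v \<in> comp C E1 u) = comp C E2 u" if u: "u \<in> C" for u
  proof -
    have "u \<in> comp C E1 u"
      using u unfolding comp_def by simp
    then have "(SOME v. v \<in> comp C E1 u) \<in> comp C E1 u"
      by (rule someI)
    then have "conn E2 u (SOME v. v \<in> comp C E1 u)"
      unfolding comp_def using conn_mono_edges[OF assms] by blast
    then show ?thesis
      by (rule comp_eq_if_conn[symmetric])
  qed
  then show ?thesis
    unfolding comps_def image_image by simp
qed

lemma card_comps_le:
  assumes "finite C" "\<And>a b. {a, b} \<in> E1 \<Longrightarrow> conn E2 a b"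
  shows "card (comps C E2) \<le> card (comps C E1)"
  using comps_eq_image[of E1 E2 C, OF assms(2)] card_image_le[OF finite_comps[OF assms(1)]] by metis

lemma comps_eq:
  assumes "\<And>a b. {a, b} \<in> E1 \<Longrightarrow> conn E2 a b" "\<And>a b. {a, b} \<in> E2 \<Longrightarrow> conn E1 a b"
  shows "comps C E1 = comps C E2"
proof -
  have "conn E1 = conn E2"
    using conn_mono_edges[OF assms(1)] conn_mono_edges[OF assms(2)] by (intro ext iffI)
  then show ?thesis
    by (simp add: comps_def comp_def)
qed

lemma conn_cong_left: "conn E w x \<Longrightarrow> conn E x y \<longleftrightarrow> conn E w y"
  using conn_trans conn_sym by metis

lemma comp_eq_comp_iff:
  assumes "x \<in> C"
  shows "comp C E x = comp C E w \<longleftrightarrow> conn E w x"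
proof
  assume eq: "comp C E x = comp C E w"
  have "x \<in> comp C E x"
    using assms unfolding comp_def by simp
  then have "x \<in> comp C E w"
    by (simp only: eq)
  then show "conn E w x"
    unfolding comp_def by simp
qed (rule comp_eq_if_conn[symmetric])

lemma comp_insert_bridge:
  assumes "\<not> conn E u v"
  shows "comp C (insert {u, v} E) x =
    (if conn E u x \<or> conn E v x then comp C E u \<union> comp C E v else comp C E x)"
proof (cases "conn E u x \<or> conn E v x")
  case True
  have "conn (insert {u, v} E) x y \<longleftrightarrow> conn E u y \<or> conn E v y" for y
    using True
  proof
    assume ux: "conn E u x"
    then show ?thesis
      unfolding conn_insert conn_cong_left[OF ux] using assms by auto
  next
    assume vx: "conn E v x"
    then show ?thesis
      unfolding conn_insert conn_cong_left[OF vx] by auto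
  qed
  then have "comp C (insert {u, v} E) x = comp C E u \<union> comp C E v"
    unfolding comp_def by auto
  then show ?thesis
    using True by simp
next
  case False
  then have "\<not> conn E x u" "\<not> conn E x v"
    using conn_sym[of E x u] conn_sym[of E x v] by blast+
  then have "comp C (insert {u, v} E) x = comp C E x"
    unfolding comp_def conn_insert by blast
  then show ?thesis
    using False by simp
qed

lemma comps_insert_bridge:
  assumes "u \<in> C" "\<not> conn E u v"
  shows "comps C (insert {u, v} E) = insert (comp C E u \<union> comp C E v) (comps C E - {comp C E u, comp C E v})"
    (is "_ = insert (?U \<union> ?V) (_ - {?U, ?V})")
proof
  show "comps C (insert {u, v} E) \<subseteq> insert (?U \<union> ?V) (comps C E - {?U, ?V})"
  proof
    fix X assume "X \<in> comps C (insert {u, v} E)"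
    then obtain x where x: "x \<in> C" "X = comp C (insert {u, v} E) x"
      unfolding comps_def by blast
    show "X \<in> insert (?U \<union> ?V) (comps C E - {?U, ?V})"
    proof (cases "conn E u x \<or> conn E v x")
      case True
      then show ?thesis
        using comp_insert_bridge[OF assms(2), of C x] x(2) by simp
    next
      case False
      then have "X = comp C E x" "comp C E x \<noteq> ?U" "comp C E x \<noteq> ?V"
        using comp_insert_bridge[OF assms(2), of C x] x comp_eq_comp_iff[OF x(1)] by auto
      then show ?thesis
        using x(1) unfolding comps_def by blast
    qed
  qed
  show "insert (?U \<union> ?V) (comps C E - {?U, ?V}) \<subseteq> comps C (insert {u, v} E)"
  proof
    fix X assume X: "X \<in> insert (?U \<union> ?V) (comps C E - {?U, ?V})"
    show "X \<in> comps C (insert {u, v} E)"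
    proof (cases "X = ?U \<union> ?V")
      case True
      then show ?thesis
        using comp_insert_bridge[OF assms(2), of C u] assms(1) unfolding comps_def by auto
    next
      case False
      then obtain x where x: "x \<in> C" "X = comp C E x" "X \<noteq> ?U" "X \<noteq> ?V"
        using X unfolding comps_def by blast
      then have "\<not> conn E u x" "\<not> conn E v x"
        using comp_eq_comp_iff[OF x(1)] by blast+
      then have "X = comp C (insert {u, v} E) x"
        using comp_insert_bridge[OF assms(2), of C x] x(2) by simp
      then show ?thesis
        using x(1) unfolding comps_def by blast
    qed
  qed
qed

lemma card_comps_insert_bridge:
  assumes "finite C" "u \<in> C" "v \<in> C" "\<not> conn E u v"
  shows "card (comps C (insert {u, v} E)) + 1 = card (comps C E)"
proof -
  define U V where "U = comp C E u" and "V = comp C E v"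
  have UV: "U \<in> comps C E" "V \<in> comps C E" "u \<in> U" "v \<in> V" "v \<notin> U"
    using assms unfolding U_def V_def comps_def comp_def by auto
  have "U \<union> V \<notin> comps C E"
  proof
    assume "U \<union> V \<in> comps C E"
    then obtain x where x: "x \<in> C" "U \<union> V = comp C E x"
      unfolding comps_def by blast
    then have "conn E x u"
      using UV(3) unfolding comp_def by auto
    then have "comp C E x = U"
      unfolding U_def by (rule comp_eq_if_conn)
    then show False
      using UV(4,5) x(2) by blast
  qed
  moreover have "U \<noteq> V"
    using UV(4,5) by blast
  moreover have "finite (comps C E)"
    using finite_comps[OF assms(1)] .
  moreover have "2 \<le> card (comps C E)"
    using card_mono[OF \<open>finite (comps C E)\<close>, of "{U, V}"] UV(1,2) \<open>U \<noteq> V\<close> by simp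
  ultimately show ?thesis
    unfolding comps_insert_bridge[OF assms(2,4)] U_def[symmetric] V_def[symmetric]
    using UV(1,2) by (simp add: card_Diff_subset)
qed


definition cycle_space :: "'a set set \<Rightarrow> 'a set set set" where
  "cycle_space E = {c. c \<subseteq> E \<and> (\<forall>v. even (card {e\<in>c. v \<in> e}))}"

lemma cycles_eq_cycle_space: "cycles K = cycle_space (edges K)"
  unfolding cycles_def cycle_space_def by simp

lemma empty_in_cycle_space: "{} \<in> cycle_space E"
  unfolding cycle_space_def by simp

lemma cycle_space_mono: "E \<subseteq> F \<Longrightarrow> cycle_space E \<subseteq> cycle_space F"
  unfolding cycle_space_def by auto

lemma cycle_space_subset: "c \<in> cycle_space E \<Longrightarrow> c \<subseteq> E"
  unfolding cycle_space_def by auto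

lemma cycle_space_restrict: "c \<in> cycle_space E \<Longrightarrow> c \<subseteq> F \<Longrightarrow> c \<in> cycle_space F"
  unfolding cycle_space_def by auto

lemma finite_cycle_space: "finite E \<Longrightarrow> finite (cycle_space E)"
  by (rule finite_subset[of _ "Pow E"]) (auto simp: cycle_space_def)

lemma card_symdiff_filter:
  assumes "finite c" "finite d"
  shows "card {e\<in>symdiff c d. P e} + 2 * card {e\<in>c \<inter> d. P e} = card {e\<in>c. P e} + card {e\<in>d. P e}"
proof -
  define A B where "A = {e\<in>c. P e}" and "B = {e\<in>d. P e}"
  have "finite A" "finite B"
    using assms unfolding A_def B_def by auto
  have "{e\<in>symdiff c d. P e} = (A - B) \<union> (B - A)" "{e\<in>c \<inter> d. P e} = A \<inter> B"
    unfolding A_def B_def symdiff_def by blast+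
  moreover have "card (A - B) + card (A \<inter> B) = card A" "card (B - A) + card (A \<inter> B) = card B"
    using card_Diff_subset_Int[of A B] card_Diff_subset_Int[of B A] \<open>finite A\<close> \<open>finite B\<close>
    by (auto simp: Int_commute card_mono le_add_diff_inverse2)
  moreover have "card ((A - B) \<union> (B - A)) = card (A - B) + card (B - A)"
    using \<open>finite A\<close> \<open>finite B\<close> by (intro card_Un_disjoint) auto
  ultimately show ?thesis
    unfolding A_def[symmetric] B_def[symmetric] by simp
qed

lemma odd_card_symdiff_filter:
  assumes "finite c" "finite d"
  shows "odd (card {e\<in>symdiff c d. P e}) \<longleftrightarrow> odd (card {e\<in>c. P e}) \<noteq> odd (card {e\<in>d. P e})"
  using card_symdiff_filter[OF assms, of P] by presburger

lemma odd_card_symdiff_edge: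
  assumes "finite P"
  shows "odd (card {e\<in>symdiff P {{y, z}}. w \<in> e}) \<longleftrightarrow> odd (card {e\<in>P. w \<in> e}) \<noteq> (w = y \<or> w = z)"
proof -
  have "{e\<in>{{y, z}}. w \<in> e} = (if w = y \<or> w = z then {{y, z}} else {})"
    by auto
  then have "odd (card {e\<in>{{y, z}}. w \<in> e}) \<longleftrightarrow> w = y \<or> w = z"
    by simp
  then show ?thesis
    using odd_card_symdiff_filter[OF assms, of "{{y, z}}" "\<lambda>e. w \<in> e"] by simp
qed

lemma z2_subspace_cycle_space:
  assumes "finite E"
  shows "z2_subspace (cycle_space E)"
  unfolding z2_subspace_def
proof (intro conjI ballI)
  fix x y assume xy: "x \<in> cycle_space E" "y \<in> cycle_space E"
  then have "finite x" "finite y"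
    unfolding cycle_space_def using assms finite_subset by blast+
  have "even (card {e\<in>symdiff x y. v \<in> e})" for v
    using xy odd_card_symdiff_filter[OF \<open>finite x\<close> \<open>finite y\<close>, of "\<lambda>e. v \<in> e"]
    unfolding cycle_space_def by auto
  moreover have "symdiff x y \<subseteq> E"
    using xy unfolding cycle_space_def symdiff_def by blast
  ultimately show "symdiff x y \<in> cycle_space E"
    unfolding cycle_space_def by blast
qed (rule empty_in_cycle_space)

text \<open>The $\mathbb{Z}_2$-sum of the edges of a walk from $u$ to $v$.\<close>

lemma conn_imp_path_chain:
  assumes "finite E" "\<forall>e\<in>E. card e = 2" "conn E u v"
  shows "\<exists>P\<subseteq>E. \<forall>w. odd (card {e\<in>P. w \<in> e}) \<longleftrightarrow> u \<noteq> v \<and> (w = u \<or> w = v)"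
  using assms(3)
proof (induction rule: conn_induct)
  case base
  show ?case
    by (intro exI[of _ "{}"]) simp
next
  case (step y z)
  then obtain P where P: "P \<subseteq> E" "\<forall>w. odd (card {e\<in>P. w \<in> e}) \<longleftrightarrow> u \<noteq> y \<and> (w = u \<or> w = y)"
    by blast
  have "y \<noteq> z"
    using assms(2) step(2) by fastforce
  have "finite P"
    using P(1) assms(1) finite_subset by blast
  have "odd (card {e\<in>symdiff P {{y, z}}. w \<in> e}) \<longleftrightarrow> u \<noteq> z \<and> (w = u \<or> w = z)" for w
    using odd_card_symdiff_edge[OF \<open>finite P\<close>] P(2) \<open>y \<noteq> z\<close> by auto
  moreover have "symdiff P {{y, z}} \<subseteq> E"
    unfolding symdiff_def using P(1) step(2) by blast
  ultimately show ?case
    by blast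
qed

lemma path_chain_insert_edge:
  assumes "P \<subseteq> E" "finite P" "{u, v} \<notin> P" "u \<noteq> v"
    and P: "\<forall>w. odd (card {e\<in>P. w \<in> e}) \<longleftrightarrow> u \<noteq> v \<and> (w = u \<or> w = v)"
  shows "insert {u, v} P \<in> cycle_space (insert {u, v} E)"
  unfolding cycle_space_def
proof (intro CollectI conjI allI)
  show "insert {u, v} P \<subseteq> insert {u, v} E"
    using assms(1) by blast
  fix w
  have "insert {u, v} P = symdiff P {{u, v}}"
    using assms(3) unfolding symdiff_def by blast
  then show "even (card {e\<in>insert {u, v} P. w \<in> e})"
    using odd_card_symdiff_edge[OF assms(2)] P assms(4) by auto
qed

lemma sum_card_incidences:
  assumes "finite A" "finite c"
  shows "(\<Sum>w\<in>A. card {x\<in>c. w \<in> x}) = (\<Sum>x\<in>c. card (x \<inter> A))"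
proof -
  have card_filter: "card {x\<in>X. P x} = (\<Sum>x\<in>X. if P x then 1 else 0)" if "finite X" for X P
    using sum.inter_filter[OF that, of "\<lambda>_. 1::nat" P] by simp
  have "(\<Sum>w\<in>A. card {x\<in>c. w \<in> x}) = (\<Sum>w\<in>A. \<Sum>x\<in>c. if w \<in> x then 1 else 0)"
    using card_filter[OF assms(2)] by simp
  also have "\<dots> = (\<Sum>x\<in>c. \<Sum>w\<in>A. if w \<in> x then 1 else 0)"
    by (rule sum.swap)
  also have "\<dots> = (\<Sum>x\<in>c. card (x \<inter> A))"
    using card_filter[OF assms(1)] by (simp add: Int_def conj_commute)
  finally show ?thesis .
qed

text \<open>The degrees of a cycle summed over the component $A$ of $u$ in $E - \{e\}$ are even, but if
  $e = \{u, v\}$ were a bridge, $e$ would be the only edge of the cycle with exactly one end in $A$.\<close>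

lemma cycle_edge_conn:
  assumes "finite E" "\<forall>e\<in>E. card e = 2" "c \<in> cycle_space E" "{u, v} \<in> c"
  shows "conn (E - {{u, v}}) u v"
proof (rule ccontr)
  define e where "e = {u, v}"
  assume not_conn: "\<not> conn (E - {{u, v}}) u v"
  have c: "c \<subseteq> E" "\<And>w. even (card {x\<in>c. w \<in> x})"
    using assms(3) unfolding cycle_space_def by auto
  have "finite c"
    using c(1) assms(1) finite_subset by blast
  define A where "A = {w\<in>\<Union>c. conn (E - {e}) u w}"
  have "finite (\<Union>c)"
    using \<open>finite c\<close> c(1) assms(2) by (metis card.infinite finite_Union subsetD zero_neq_numeral)
  then have "finite A"
    unfolding A_def by (rule finite_subset[rotated]) blast
  have "even (\<Sum>w\<in>A. card {x\<in>c. w \<in> x})"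
    using c(2) by (intro dvd_sum)
  then have even_sum: "even (\<Sum>x\<in>c. card (x \<inter> A))"
    using sum_card_incidences[OF \<open>finite A\<close> \<open>finite c\<close>] by simp
  have "e \<inter> A = {u}"
    using not_conn assms(4) unfolding A_def e_def by auto
  moreover have "even (\<Sum>x\<in>c - {e}. card (x \<inter> A))"
  proof (rule dvd_sum)
    fix x assume x: "x \<in> c - {e}"
    obtain p q where pq: "x = {p, q}" "p \<noteq> q"
      using x c(1) assms(2) by (meson DiffD1 card_2_iff subsetD)
    have "{p, q} \<in> E - {e}"
      using x c(1) pq by blast
    then have "conn (E - {e}) p q" "conn (E - {e}) q p"
      by (auto intro: conn_edge simp: insert_commute)
    then have "p \<in> A \<longleftrightarrow> q \<in> A"
      using x pq conn_trans[of "E - {e}" u] unfolding A_def by blast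
    then show "even (card (x \<inter> A))"
      using pq by (cases "p \<in> A") auto
  qed
  ultimately have "odd (\<Sum>x\<in>c. card (x \<inter> A))"
    using assms(4) \<open>finite c\<close> unfolding e_def by (simp add: sum.remove)
  then show False
    using even_sum by simp
qed

lemma conn_Diff_cycle_edge:
  assumes "finite E" "\<forall>x\<in>E. card x = 2" "c \<in> cycle_space E" "e \<in> c" "conn E x y"
  shows "conn (E - {e}) x y"
  using assms(5)
proof (rule conn_mono_edges[rotated])
  fix p q assume pq: "{p, q} \<in> E"
  show "conn (E - {e}) p q"
  proof (cases "{p, q} = e")
    case True
    then show ?thesis
      using cycle_edge_conn[OF assms(1-3), of p q] assms(4) by blast
  next
    case False
    then show ?thesis
      using pq by (intro conn_edge) blast
  qed
qed

lemma cycle_exits_subgraph: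
  assumes "finite E" "\<forall>x\<in>E. card x = 2" "c \<in> cycle_space E" "{a, b} \<in> c" "\<not> conn F a b"
  shows "\<exists>e\<in>c. e \<notin> insert {a, b} F"
proof (rule ccontr)
  define F' where "F' = insert {a, b} F \<inter> E"
  assume "\<not> (\<exists>e\<in>c. e \<notin> insert {a, b} F)"
  then have "c \<subseteq> F'"
    using cycle_space_subset[OF assms(3)] unfolding F'_def by blast
  then have c': "c \<in> cycle_space F'"
    by (rule cycle_space_restrict[OF assms(3)])
  have F': "finite F'" "\<forall>x\<in>F'. card x = 2"
    using assms(1,2) unfolding F'_def by simp_all
  have "conn (F' - {{a, b}}) a b"
    by (rule cycle_edge_conn[OF F' c' assms(4)])
  then have "conn F a b"
    by (rule conn_mono[rotated]) (auto simp: F'_def)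
  then show False
    using assms(5) by simp
qed

lemma cycle_space_insert_bridge:
  assumes "finite E" "\<forall>x\<in>E. card x = 2" "card {u, v} = 2" "\<not> conn E u v"
  shows "cycle_space (insert {u, v} E) = cycle_space E"
proof
  show "cycle_space (insert {u, v} E) \<subseteq> cycle_space E"
  proof
    fix c assume c: "c \<in> cycle_space (insert {u, v} E)"
    have "{u, v} \<notin> c"
    proof
      assume "{u, v} \<in> c"
      then have "conn (insert {u, v} E - {{u, v}}) u v"
        using cycle_edge_conn[of "insert {u, v} E" c u v] c assms(1-3) by simp
      then show False
        using assms(4) conn_mono[of "insert {u, v} E - {{u, v}}" E] by blast
    qed
    then show "c \<in> cycle_space E"
      using c unfolding cycle_space_def by auto
  qed
qed (rule cycle_space_mono, blast)

lemma card_cycle_space_insert_conn: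
  assumes "finite E" "\<forall>x\<in>E. card x = 2" "card {u, v} = 2" "{u, v} \<notin> E" "conn E u v"
  shows "card (cycle_space (insert {u, v} E)) = 2 * card (cycle_space E)"
proof -
  define e where "e = {u, v}"
  obtain P where P: "P \<subseteq> E" "\<forall>w. odd (card {x\<in>P. w \<in> x}) \<longleftrightarrow> u \<noteq> v \<and> (w = u \<or> w = v)"
    using conn_imp_path_chain[OF assms(1,2,5)] by blast
  define c0 where "c0 = insert e P"
  have c0: "c0 \<in> cycle_space (insert e E)"
    unfolding c0_def e_def using P assms(1,3,4) finite_subset
    by (intro path_chain_insert_edge) (auto simp: card_2_iff)
  have sub: "z2_subspace (cycle_space (insert e E))"
    using assms(1) by (intro z2_subspace_cycle_space) simp
  have "cycle_space (insert e E) = cycle_space E \<union> symdiff c0 ` cycle_space E"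
  proof
    show "cycle_space (insert e E) \<subseteq> cycle_space E \<union> symdiff c0 ` cycle_space E"
    proof
      fix c assume c: "c \<in> cycle_space (insert e E)"
      show "c \<in> cycle_space E \<union> symdiff c0 ` cycle_space E"
      proof (cases "e \<in> c")
        case True
        have "symdiff c0 c \<in> cycle_space (insert e E)"
          using z2_subspace_symdiff[OF sub c0 c] .
        moreover have "e \<notin> symdiff c0 c"
          unfolding c0_def using True by (simp add: mem_symdiff)
        ultimately have "symdiff c0 c \<in> cycle_space E"
          unfolding cycle_space_def by auto
        then show ?thesis
          by (intro UnI2 image_eqI[of _ _ "symdiff c0 c"]) auto
      qed (use c in \<open>auto simp: cycle_space_def\<close>)
    qed
    show "cycle_space E \<union> symdiff c0 ` cycle_space E \<subseteq> cycle_space (insert e E)"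
      using cycle_space_mono[of E "insert e E"] z2_subspace_symdiff[OF sub c0] by blast
  qed
  moreover have "cycle_space E \<inter> symdiff c0 ` cycle_space E = {}"
  proof -
    have "e \<notin> c" "e \<in> symdiff c0 c" if "c \<in> cycle_space E" for c
      using that assms(4) unfolding e_def c0_def cycle_space_def by (auto simp: mem_symdiff)
    then show ?thesis
      by blast
  qed
  ultimately show ?thesis
    using finite_cycle_space[OF assms(1)] card_image[OF inj_on_symdiff[of c0 "cycle_space E"]]
    unfolding e_def by (simp add: card_Un_disjoint)
qed

lemma graph_onD: "graph_on C E \<Longrightarrow> e \<in> E \<Longrightarrow> \<exists>u v. e = {u, v} \<and> u \<noteq> v \<and> u \<in> C \<and> v \<in> C"
  unfolding graph_on_def by (metis card_2_iff insert_subset)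

lemma graph_on_finite: "finite C \<Longrightarrow> graph_on C E \<Longrightarrow> finite E"
  unfolding graph_on_def by (meson PowI finite_Pow_iff finite_subset subsetI)

lemma graph_on_card2: "graph_on C E \<Longrightarrow> \<forall>x\<in>E. card x = 2"
  unfolding graph_on_def by auto

lemma graph_on_subset: "graph_on C E \<Longrightarrow> F \<subseteq> E \<Longrightarrow> graph_on C F"
  unfolding graph_on_def by auto

text \<open>Euler's formula $\dim Z_1 - \beta_0 = |E| - |C|$, by induction on the edges: an edge
  either joins two components or, closing a cycle, doubles the cycle space.\<close>

lemma cycle_rank:
  assumes "finite C" "graph_on C E"
  shows "dimZ2 (cycle_space E) + card C = card E + card (comps C E)"
proof -
  have "finite E"
    by (rule graph_on_finite[OF assms])
  then show ?thesis
    using assms(2)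
  proof (induction E rule: finite_induct)
    case empty
    have "cycle_space ({} :: 'a set set) = {{}}"
      unfolding cycle_space_def by auto
    then show ?case
      using dimZ2_eq[of "{{}}" 0] by (simp add: card_comps_empty)
  next
    case (insert e E)
    have gE: "graph_on C E"
      using insert(4) by (rule graph_on_subset) blast
    obtain u v where e: "e = {u, v}" "u \<noteq> v" "u \<in> C" "v \<in> C"
      using graph_onD[OF insert(4)] by blast
    have sub: "z2_subspace (cycle_space E)"
      using insert(1) by (rule z2_subspace_cycle_space)
    have fin: "finite (cycle_space E)"
      using insert(1) by (rule finite_cycle_space)
    show ?case
    proof (cases "conn E u v")
      case True
      have "comps C (insert e E) = comps C E"
        unfolding e comps_def comp_def conn_insert_conn[OF True] ..
      moreover have "dimZ2 (cycle_space (insert e E)) = Suc (dimZ2 (cycle_space E))"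
      proof (rule dimZ2_eq)
        show "card (cycle_space (insert e E)) = 2 ^ Suc (dimZ2 (cycle_space E))"
          unfolding e using card_cycle_space_insert_conn[OF insert(1) graph_on_card2[OF gE] _ _ True]
            card_z2_subspace[OF sub fin] insert(2) e by simp
      qed
      ultimately show ?thesis
        using insert(1,2) insert.IH[OF gE] by simp
    next
      case False
      have "card (comps C (insert e E)) + 1 = card (comps C E)"
        unfolding e using card_comps_insert_bridge[OF assms(1) e(3,4) False] .
      moreover have "cycle_space (insert e E) = cycle_space E"
        unfolding e using cycle_space_insert_bridge[OF insert(1) graph_on_card2[OF gE] _ False] e(2)
        by simp
      ultimately show ?thesis
        using insert(1,2) insert.IH[OF gE] by simp
    qed
  qed
qed


section \<open>Trees and minimum spanning trees\<close>

lemma filtrationD: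
  assumes "filtration C S ent"
  shows "finite C" "finite S" "\<And>\<sigma>. \<sigma> \<in> S \<Longrightarrow> \<sigma> \<subseteq> C" "\<And>\<sigma>. \<sigma> \<in> S \<Longrightarrow> 0 \<le> ent \<sigma>"
  using assms finite_subset[of S "Pow C"] unfolding filtration_def by auto

lemma tree_cycle_space:
  assumes "finite C" "is_tree C T"
  shows "cycle_space T = {{}}"
proof -
  have g: "graph_on C T"
    using assms(2) unfolding is_tree_def by simp
  have "c = {}" if c: "c \<in> cycle_space T" for c
  proof (rule ccontr)
    assume "c \<noteq> {}"
    then obtain e where e: "e \<in> c"
      by blast
    then have "e \<in> T"
      using c unfolding cycle_space_def by auto
    then obtain u v where "e = {u, v}"
      using graph_onD[OF g] by blast
    then have "conn (T - {e}) u v"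
      using cycle_edge_conn[OF graph_on_finite[OF assms(1) g] graph_on_card2[OF g] c] e by simp
    then show False
      using assms(2) \<open>e \<in> T\<close> \<open>e = {u, v}\<close> unfolding is_tree_def by blast
  qed
  then show ?thesis
    using empty_in_cycle_space by blast
qed

lemma acyclic_connected_is_tree:
  assumes "finite C" "graph_on C T" "connected_graph C T" "cycle_space T = {{}}"
  shows "is_tree C T"
  unfolding is_tree_def
proof (intro conjI assms(2,3) ballI allI impI notI)
  fix e u v assume e: "e \<in> T" "e = {u, v}" and conn_uv: "conn (T - {e}) u v"
  have fin: "finite (T - {e})"
    using graph_on_finite[OF assms(1,2)] by simp
  have card2: "\<forall>x\<in>T - {e}. card x = 2" "card {u, v} = 2"
    using graph_on_card2[OF assms(2)] e by auto
  obtain P where P: "P \<subseteq> T - {e}" "\<forall>w. odd (card {x\<in>P. w \<in> x}) \<longleftrightarrow> u \<noteq> v \<and> (w = u \<or> w = v)"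
    using conn_imp_path_chain[OF fin card2(1) conn_uv] by blast
  have "insert e P \<in> cycle_space (insert e (T - {e}))"
    unfolding e(2) using P fin card2(2) finite_subset[OF P(1)]
    by (intro path_chain_insert_edge) (auto simp: e(2) card_2_iff)
  moreover have "insert e (T - {e}) = T"
    using e(1) by blast
  ultimately show False
    using assms(4) by simp
qed

lemma fundamental_cycle:
  assumes "finite C" "is_tree C T" "a \<in> C" "b \<in> C" "a \<noteq> b" "{a, b} \<notin> T"
  obtains P where "P \<subseteq> T" "insert {a, b} P \<in> cycle_space (insert {a, b} T)"
proof -
  have g: "graph_on C T"
    using assms(2) unfolding is_tree_def by simp
  have finT: "finite T"
    using graph_on_finite[OF assms(1) g] .
  have "conn T a b"
    using assms(2-4) unfolding is_tree_def connected_graph_def by blast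
  from conn_imp_path_chain[OF finT graph_on_card2[OF g] this]
  obtain P where P: "P \<subseteq> T" "\<forall>w. odd (card {x\<in>P. w \<in> x}) \<longleftrightarrow> a \<noteq> b \<and> (w = a \<or> w = b)"
    by blast
  have "finite P" "{a, b} \<notin> P"
    using finite_subset[OF P(1) finT] P(1) assms(6) by auto
  then have "insert {a, b} P \<in> cycle_space (insert {a, b} T)"
    using path_chain_insert_edge[OF P(1)] assms(5) P(2) by blast
  then show ?thesis
    using that P(1) by blast
qed

lemma cycle_space_exchange:
  assumes "finite T" "cycle_space T = {{}}" "f \<notin> T"
    and c: "c \<in> cycle_space (insert f T)" "e \<in> c" "e \<in> T"
  shows "cycle_space (insert f (T - {e})) = {{}}"
proof -
  have sub: "z2_subspace (cycle_space (insert f T))"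
    using assms(1) by (intro z2_subspace_cycle_space) simp
  have "f \<in> c"
  proof (rule ccontr)
    assume "f \<notin> c"
    then have "c \<in> cycle_space T"
      using cycle_space_restrict[OF c(1)] cycle_space_subset[OF c(1)] by blast
    then show False
      using assms(2) c(2) by blast
  qed
  have "c' = {}" if c': "c' \<in> cycle_space (insert f (T - {e}))" for c'
  proof (cases "f \<in> c'")
    case True
    have "c' \<in> cycle_space (insert f T)"
      using c' cycle_space_mono[of "insert f (T - {e})" "insert f T"] by blast
    then have "symdiff c c' \<in> cycle_space (insert f T)"
      using z2_subspace_symdiff[OF sub c(1)] by blast
    then have "symdiff c c' \<in> cycle_space T"
      using True \<open>f \<in> c\<close> unfolding cycle_space_def by (auto simp: mem_symdiff)
    then have "c' = c"
      using assms(2) by (simp add: symdiff_eq_iff)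
    moreover have "e \<notin> c'"
      using cycle_space_subset[OF c'] assms(3) c(3) by auto
    ultimately show ?thesis
      using c(2) by blast
  next
    case False
    then have "c' \<in> cycle_space T"
      using cycle_space_restrict[OF c'] cycle_space_subset[OF c'] by blast
    then show ?thesis
      using assms(2) by blast
  qed
  then show ?thesis
    using empty_in_cycle_space by blast
qed

lemma tree_exchange:
  assumes "finite C" "is_tree C T" "a \<in> C" "b \<in> C" "a \<noteq> b" "{a, b} \<notin> T"
    and c: "c \<in> cycle_space (insert {a, b} T)" "e \<in> c" "e \<in> T"
  shows "is_tree C (insert {a, b} (T - {e}))"
proof -
  define f where "f = {a, b}"
  define T' where "T' = insert f (T - {e})"
  have g: "graph_on C T"
    using assms(2) unfolding is_tree_def by simp
  then have g': "graph_on C T'" "graph_on C (insert f T)"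
    using assms(3-5) unfolding T'_def f_def graph_on_def by auto
  have fin: "finite (insert f T)"
    using graph_on_finite[OF assms(1) g] by simp
  have "cycle_space T' = {{}}"
    unfolding T'_def f_def
    using cycle_space_exchange[OF graph_on_finite[OF assms(1) g] tree_cycle_space[OF assms(1,2)] assms(6) c] .
  moreover have "connected_graph C T'"
    unfolding connected_graph_def
  proof (intro ballI)
    fix x y assume "x \<in> C" "y \<in> C"
    then have "conn (insert f T) x y"
      using assms(2) conn_mono[of T "insert f T"] unfolding is_tree_def connected_graph_def by blast
    then have "conn (insert f T - {e}) x y"
      using conn_Diff_cycle_edge[OF fin graph_on_card2[OF g'(2)] c(1)[folded f_def] c(2)] by blast
    moreover have "insert f T - {e} = T'"
      using c(3) assms(6) unfolding T'_def f_def by auto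
    ultimately show "conn T' x y"
      by simp
  qed
  ultimately show ?thesis
    unfolding T'_def f_def using acyclic_connected_is_tree[OF assms(1) g'(1)[unfolded T'_def f_def]] by blast
qed

text \<open>The cut property: otherwise an edge of the fundamental cycle of $\{a, b\}$ entering after
  scale $s$ could be exchanged for $\{a, b\}$, giving a shorter spanning tree.\<close>

lemma MST_level_conn:
  assumes filt: "filtration C S ent" and mst: "is_MST C S ent T"
    and f: "{a, b} \<in> edges (Qle S ent s)"
  shows "conn {e\<in>T. ent e \<le> s} a b"
proof (rule ccontr)
  define Ts where "Ts = {e\<in>T. ent e \<le> s}"
  define f where "f = {a, b}"
  assume "\<not> conn {e\<in>T. ent e \<le> s} a b"
  then have not_conn: "\<not> conn Ts a b"
    unfolding Ts_def .
  have fC: "finite C"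
    using filtrationD[OF filt] by simp
  have tree: "is_tree C T" and TS: "T \<subseteq> edges S"
    using mst unfolding is_MST_def by auto
  have g: "graph_on C T"
    using tree unfolding is_tree_def by simp
  have finT: "finite T"
    using graph_on_finite[OF fC g] .
  have fS: "f \<in> S" "ent f \<le> s" "card f = 2"
    using f unfolding f_def edges_def Qle_def by auto
  have ab: "a \<in> C" "b \<in> C" "a \<noteq> b"
    using filtrationD(3)[OF filt fS(1)] fS(3) unfolding f_def by auto
  have "f \<notin> T"
  proof
    assume "f \<in> T"
    then have "f \<in> Ts"
      using fS(2) unfolding Ts_def by simp
    then show False
      using not_conn conn_edge[of a b Ts] unfolding f_def by simp
  qed
  obtain P where P: "P \<subseteq> T" "insert f P \<in> cycle_space (insert f T)"
    using fundamental_cycle[OF fC tree ab] \<open>f \<notin> T\<close> unfolding f_def by blast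
  have "finite (insert f T)" "\<forall>x\<in>insert f T. card x = 2"
    using finT graph_on_card2[OF g] fS(3) by auto
  then obtain e where e: "e \<in> insert f P" "e \<notin> insert f Ts"
    using cycle_exits_subgraph[of "insert f T" "insert f P" a b Ts] P(2) not_conn unfolding f_def by blast
  then have eT: "e \<in> T" "s < ent e"
    using P(1) unfolding Ts_def by auto
  define T' where "T' = insert f (T - {e})"
  have "is_tree C T'"
    using tree_exchange[OF fC tree ab _ P(2)[unfolded f_def] e(1)[unfolded f_def] eT(1)] \<open>f \<notin> T\<close>
    unfolding T'_def f_def by blast
  moreover have "T' \<subseteq> edges S"
    using TS fS unfolding T'_def edges_def by auto
  ultimately have "total_len ent T \<le> total_len ent T'"
    using mst unfolding is_MST_def by blast
  moreover have "total_len ent T' = total_len ent T - elen ent e + elen ent f"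
    unfolding T'_def total_len_def using \<open>f \<notin> T\<close> eT finT by (simp add: sum_diff1)
  moreover have "elen ent f < elen ent e"
    unfolding elen_def using fS(2) eT(2) by simp
  ultimately show False
    by simp
qed

lemma card_MST_level:
  assumes filt: "filtration C S ent" and mst: "is_MST C S ent T"
  shows "card {e\<in>T. ent e \<le> s} + card (comps C (edges (Qle S ent s))) = card C"
proof -
  define Ts where "Ts = {e\<in>T. ent e \<le> s}"
  have fC: "finite C"
    using filtrationD[OF filt] by simp
  have tree: "is_tree C T" and TS: "T \<subseteq> edges S"
    using mst unfolding is_MST_def by auto
  have g: "graph_on C Ts"
    using tree unfolding Ts_def is_tree_def graph_on_def by auto
  have "cycle_space Ts \<subseteq> cycle_space T"
    unfolding Ts_def by (rule cycle_space_mono) auto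
  then have "cycle_space Ts = {{}}"
    using tree_cycle_space[OF fC tree] empty_in_cycle_space by blast
  then have "card Ts + card (comps C Ts) = card C"
    using cycle_rank[OF fC g] dimZ2_eq[of "cycle_space Ts" 0] by simp
  moreover have "comps C Ts = comps C (edges (Qle S ent s))"
  proof (rule comps_eq)
    fix x y assume "{x, y} \<in> Ts"
    then have "{x, y} \<in> edges (Qle S ent s)"
      using TS unfolding Ts_def edges_def Qle_def by auto
    then show "conn (edges (Qle S ent s)) x y"
      by (rule conn_edge)
  next
    fix x y assume "{x, y} \<in> edges (Qle S ent s)"
    then show "conn Ts x y"
      unfolding Ts_def by (rule MST_level_conn[OF filt mst])
  qed
  ultimately show ?thesis
    unfolding Ts_def by simp
qed


section \<open>Homology classes and ranks of induced maps\<close>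

definition bounding_cycles :: "'a set set \<Rightarrow> 'a set set set" where
  "bounding_cycles K = boundaries K \<inter> cycles K"

lemma bd2_symdiff:
  assumes "finite T1" "finite T2"
  shows "bd2 (symdiff T1 T2) = symdiff (bd2 T1) (bd2 T2)"
proof (rule set_eqI)
  fix e
  have "odd (card {t\<in>symdiff T1 T2. e \<subseteq> t}) \<longleftrightarrow>
      odd (card {t\<in>T1. e \<subseteq> t}) \<noteq> odd (card {t\<in>T2. e \<subseteq> t})"
    by (rule odd_card_symdiff_filter[OF assms])
  then show "e \<in> bd2 (symdiff T1 T2) \<longleftrightarrow> e \<in> symdiff (bd2 T1) (bd2 T2)"
    unfolding bd2_def mem_Collect_eq mem_symdiff[of e] by blast
qed

lemma finite_cycles: "finite K \<Longrightarrow> finite (cycles K)"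
  unfolding cycles_eq_cycle_space edges_def by (simp add: finite_cycle_space)

lemma finite_bounding_cycles: "finite K \<Longrightarrow> finite (bounding_cycles K)"
  unfolding bounding_cycles_def by (simp add: finite_cycles)

lemma z2_subspace_cycles: "finite K \<Longrightarrow> z2_subspace (cycles K)"
  unfolding cycles_eq_cycle_space edges_def by (simp add: z2_subspace_cycle_space)

lemma z2_subspace_boundaries:
  assumes "finite K"
  shows "z2_subspace (boundaries K)"
  unfolding z2_subspace_def boundaries_def
proof (intro conjI ballI)
  show "{} \<in> bd2 ` Pow (triangles K)"
    by (rule image_eqI[of _ _ "{}"]) (auto simp: bd2_def)
  fix x y assume "x \<in> bd2 ` Pow (triangles K)" "y \<in> bd2 ` Pow (triangles K)"
  then obtain T1 T2 where T: "T1 \<subseteq> triangles K" "T2 \<subseteq> triangles K" "x = bd2 T1" "y = bd2 T2"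
    by blast
  moreover have "finite (triangles K)"
    using assms unfolding triangles_def by simp
  then have "finite T1" "finite T2"
    using T(1,2) finite_subset by blast+
  moreover have "symdiff T1 T2 \<subseteq> triangles K"
    using T(1,2) unfolding symdiff_def by blast
  ultimately show "symdiff x y \<in> bd2 ` Pow (triangles K)"
    using bd2_symdiff by blast
qed

lemma z2_subspace_bounding_cycles: "finite K \<Longrightarrow> z2_subspace (bounding_cycles K)"
  unfolding bounding_cycles_def by (intro z2_subspace_Int z2_subspace_boundaries z2_subspace_cycles)

lemma cycles_mono: "K \<subseteq> L \<Longrightarrow> cycles K \<subseteq> cycles L"
  unfolding cycles_eq_cycle_space by (rule cycle_space_mono) (auto simp: edges_def)

lemma boundaries_mono: "K \<subseteq> L \<Longrightarrow> boundaries K \<subseteq> boundaries L"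
  unfolding boundaries_def triangles_def by auto

lemma bounding_cycles_mono: "K \<subseteq> L \<Longrightarrow> bounding_cycles K \<subseteq> bounding_cycles L"
  using cycles_mono boundaries_mono unfolding bounding_cycles_def by blast

lemma hclass_eq_coset:
  assumes "finite K" "c \<in> cycles K"
  shows "hclass K c = coset (bounding_cycles K) c"
proof
  have sub: "z2_subspace (cycles K)"
    by (rule z2_subspace_cycles[OF assms(1)])
  show "hclass K c \<subseteq> coset (bounding_cycles K) c"
  proof
    fix c' assume "c' \<in> hclass K c"
    then have "c' \<in> cycles K" "symdiff c c' \<in> boundaries K"
      unfolding hclass_def by auto
    then have "symdiff c c' \<in> bounding_cycles K"
      using z2_subspace_symdiff[OF sub assms(2)] unfolding bounding_cycles_def by simp
    then show "c' \<in> coset (bounding_cycles K) c"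
      unfolding coset_def by (intro image_eqI[of _ _ "symdiff c c'"]) auto
  qed
  show "coset (bounding_cycles K) c \<subseteq> hclass K c"
    using z2_subspace_symdiff[OF sub assms(2)]
    unfolding coset_def hclass_def bounding_cycles_def by auto
qed

lemma induced_hclass:
  assumes "K \<subseteq> L" "finite L" "c \<in> cycles K"
  shows "induced K L (hclass K c) = coset (bounding_cycles L) c"
proof -
  have "finite K"
    using assms(1,2) finite_subset by blast
  define z where "z = (SOME z. z \<in> hclass K c)"
  have "c \<in> hclass K c"
    using assms(3) z2_subspace_empty[OF z2_subspace_boundaries[OF \<open>finite K\<close>]]
    unfolding hclass_def by simp
  then have "z \<in> hclass K c"
    unfolding z_def by (rule someI)
  then have z: "z \<in> cycles L" "symdiff c z \<in> boundaries L"
    using cycles_mono[OF assms(1)] boundaries_mono[OF assms(1)] unfolding hclass_def by auto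
  then have "symdiff c z \<in> bounding_cycles L"
    using z2_subspace_symdiff[OF z2_subspace_cycles[OF assms(2)]] cycles_mono[OF assms(1)] assms(3)
    unfolding bounding_cycles_def by blast
  then have "coset (bounding_cycles L) (symdiff z (symdiff c z)) = coset (bounding_cycles L) z"
    by (rule coset_shift[OF z2_subspace_bounding_cycles[OF assms(2)]])
  moreover have "symdiff z (symdiff c z) = c"
    unfolding symdiff_def by blast
  ultimately show ?thesis
    unfolding induced_def z_def[symmetric] hclass_eq_coset[OF assms(2) z(1)] by simp
qed

lemma induced_image:
  assumes "K \<subseteq> L" "finite L"
  shows "induced K L ` H1 K = coset (bounding_cycles L) ` cycles K"
  unfolding H1_def image_image using induced_hclass[OF assms] by simp

text \<open>The image of $H_1(K) \to H_1(L)$ is $(Z_K + B_L)/B_L$.\<close>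

lemma card_induced_image:
  assumes "K \<subseteq> L" "finite L"
  shows "card (induced K L ` H1 K) = 2 ^ hrank K L"
    and "int (hrank K L) =
      int (dimZ2 (z2_sum (cycles K) (bounding_cycles L))) - int (dimZ2 (bounding_cycles L))"
proof -
  have "finite K"
    using assms finite_subset by blast
  then have fin: "finite (cycles K)" "finite (bounding_cycles L)"
    and sub: "z2_subspace (cycles K)" "z2_subspace (bounding_cycles L)"
    using assms(2) by (simp_all add: finite_cycles finite_bounding_cycles
        z2_subspace_cycles z2_subspace_bounding_cycles)
  define dS dB where "dS = dimZ2 (z2_sum (cycles K) (bounding_cycles L))"
    and "dB = dimZ2 (bounding_cycles L)"
  have "dB \<le> dS"
    unfolding dS_def dB_def
    using sub z2_sum_upper2[OF z2_subspace_empty[OF sub(1)]] finite_z2_sum[OF fin]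
    by (intro dimZ2_mono z2_subspace_sum)
  then have "(2::nat) ^ dS = 2 ^ (dS - dB) * 2 ^ dB"
    by (simp add: power_add[symmetric])
  moreover have "card (induced K L ` H1 K) * 2 ^ dB = 2 ^ dS"
    unfolding induced_image[OF assms] dS_def dB_def
    using card_cosets[OF sub(2) fin(1,2)] card_z2_subspace[OF sub(2) fin(2)]
      card_z2_subspace[OF z2_subspace_sum[OF sub] finite_z2_sum[OF fin]] by simp
  ultimately have card: "card (induced K L ` H1 K) = 2 ^ (dS - dB)"
    by simp
  then have "hrank K L = dS - dB"
    unfolding hrank_def by (rule dimZ2_eq)
  then show "card (induced K L ` H1 K) = 2 ^ hrank K L"
    and "int (hrank K L) = int dS - int dB"
    using card \<open>dB \<le> dS\<close> by simp_all
qed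

lemma hrank_mono_left:
  assumes "K1 \<subseteq> K2" "K2 \<subseteq> L" "finite L"
  shows "hrank K1 L \<le> hrank K2 L"
proof -
  have "finite K2" "finite K1"
    using finite_subset[OF assms(2,3)] finite_subset[OF assms(1)] by blast+
  then have fin: "finite (cycles K1)" "finite (cycles K2)" "finite (bounding_cycles L)"
    and sub: "z2_subspace (cycles K1)" "z2_subspace (cycles K2)" "z2_subspace (bounding_cycles L)"
    using assms(3) by (simp_all add: finite_cycles finite_bounding_cycles
        z2_subspace_cycles z2_subspace_bounding_cycles)
  have "dimZ2 (z2_sum (cycles K1) (bounding_cycles L)) \<le> dimZ2 (z2_sum (cycles K2) (bounding_cycles L))"
    using sub fin cycles_mono[OF assms(1)]
    by (intro dimZ2_mono z2_subspace_sum z2_sum_mono finite_z2_sum) auto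
  then show ?thesis
    using card_induced_image(2)[OF order_trans[OF assms(1,2)] assms(3)]
      card_induced_image(2)[OF assms(2,3)] by linarith
qed

text \<open>By the dimension formula, the rank gained when $K_1 \subseteq K_2$ grows depends on $L$ only
  through $Z_{K_2} \cap B_L$.\<close>

lemma hrank_diff:
  assumes "K1 \<subseteq> K2" "K2 \<subseteq> L" "finite L"
  shows "int (hrank K2 L) - int (hrank K1 L) =
     int (dimZ2 (cycles K2)) - int (dimZ2 (z2_sum (cycles K1) (cycles K2 \<inter> bounding_cycles L)))"
proof -
  have "finite K2" "finite K1"
    using finite_subset[OF assms(2,3)] finite_subset[OF assms(1)] by blast+
  then have fin: "finite (cycles K1)" "finite (cycles K2)" "finite (bounding_cycles L)"
    and sub: "z2_subspace (cycles K1)" "z2_subspace (cycles K2)" "z2_subspace (bounding_cycles L)"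
    using assms(3) by (simp_all add: finite_cycles finite_bounding_cycles
        z2_subspace_cycles z2_subspace_bounding_cycles)
  have "cycles K1 \<inter> (cycles K2 \<inter> bounding_cycles L) = cycles K1 \<inter> bounding_cycles L"
    using cycles_mono[OF assms(1)] by blast
  moreover have "finite (cycles K2 \<inter> bounding_cycles L)"
    using fin(2) by simp
  ultimately show ?thesis
    using dimZ2_sum_Int[OF sub(2,3) fin(2,3)] dimZ2_sum_Int[OF sub(1,3) fin(1,3)]
      dimZ2_sum_Int[OF sub(1) z2_subspace_Int[OF sub(2,3)] fin(1)]
      card_induced_image(2)[OF order_trans[OF assms(1,2)] assms(3)]
      card_induced_image(2)[OF assms(2,3)]
    by simp
qed

lemma hrank_diff_antimono:
  assumes "K1 \<subseteq> K2" "K2 \<subseteq> L1" "L1 \<subseteq> L2" "finite L2"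
  shows "int (hrank K2 L2) - int (hrank K1 L2) \<le> int (hrank K2 L1) - int (hrank K1 L1)"
proof -
  have "finite L1" "finite K2" "finite K1"
    using finite_subset[OF assms(3,4)] finite_subset[OF assms(2)] finite_subset[OF assms(1)] by blast+
  then have fin: "finite (cycles K1)" "finite (cycles K2)"
    and sub: "z2_subspace (cycles K1)" "z2_subspace (cycles K2)"
      "z2_subspace (bounding_cycles L1)" "z2_subspace (bounding_cycles L2)"
    using assms(4) by (simp_all add: finite_cycles z2_subspace_cycles z2_subspace_bounding_cycles)
  have "dimZ2 (z2_sum (cycles K1) (cycles K2 \<inter> bounding_cycles L1))
      \<le> dimZ2 (z2_sum (cycles K1) (cycles K2 \<inter> bounding_cycles L2))"
    using sub fin bounding_cycles_mono[OF assms(3)]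
    by (intro dimZ2_mono z2_subspace_sum z2_subspace_Int z2_sum_mono finite_z2_sum) auto
  then show ?thesis
    using hrank_diff[OF assms(1,2) \<open>finite L1\<close>] hrank_diff[OF assms(1) order_trans[OF assms(2,3)] assms(4)]
    by linarith
qed


section \<open>Counting dots of the persistence diagram\<close>

lemma Qle_mono: "a \<le> b \<Longrightarrow> Qle S ent a \<subseteq> Qle S ent b"
  unfolding Qle_def by auto

lemma Qlt_subset_Qle: "a \<le> b \<Longrightarrow> Qlt S ent a \<subseteq> Qle S ent b"
  unfolding Qle_def Qlt_def by auto

lemma Qle_subset_Qlt: "a < b \<Longrightarrow> Qle S ent a \<subseteq> Qlt S ent b"
  unfolding Qle_def Qlt_def by auto

lemma Qle_subset: "Qle S ent a \<subseteq> S"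
  unfolding Qle_def by auto

lemma finite_Qle: "finite S \<Longrightarrow> finite (Qle S ent a)"
  unfolding Qle_def by simp

lemma sum_level_jumps:
  fixes \<phi> :: "'a set set \<Rightarrow> int"
  assumes "finite S" "t \<le> a"
  shows "(\<Sum>b\<in>{b\<in>ent ` S. t < b \<and> b \<le> a}. \<phi> (Qle S ent b) - \<phi> (Qlt S ent b))
           = \<phi> (Qle S ent a) - \<phi> (Qle S ent t)"
  using assms(2)
proof (induction "card {b\<in>ent ` S. t < b \<and> b \<le> a}" arbitrary: t rule: less_induct)
  case less
  define W where "W = {b\<in>ent ` S. t < b \<and> b \<le> a}"
  have "finite W"
    unfolding W_def using assms(1) by simp
  show ?case
  proof (cases "W = {}")
    case True
    then have "Qle S ent a = Qle S ent t"
      using less.prems unfolding W_def Qle_def by force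
    then show ?thesis
      unfolding W_def[symmetric] using True by simp
  next
    case False
    define b0 where "b0 = Min W"
    have b0: "b0 \<in> W" "\<And>b. b \<in> W \<Longrightarrow> b0 \<le> b"
      unfolding b0_def using \<open>finite W\<close> False by simp_all
    then have "t < b0" "b0 \<le> a"
      unfolding W_def by auto
    have "Qlt S ent b0 = Qle S ent t"
      using b0 \<open>t < b0\<close> \<open>b0 \<le> a\<close> unfolding Qlt_def Qle_def W_def by force
    moreover have "W - {b0} = {b\<in>ent ` S. b0 < b \<and> b \<le> a}"
      using b0 \<open>t < b0\<close> unfolding W_def by force
    moreover have "card (W - {b0}) < card W"
      using \<open>finite W\<close> b0(1) by (rule card_Diff1_less)
    ultimately have "(\<Sum>b\<in>W - {b0}. \<phi> (Qle S ent b) - \<phi> (Qlt S ent b))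
        = \<phi> (Qle S ent a) - \<phi> (Qle S ent b0)"
      using less.hyps[of b0] \<open>b0 \<le> a\<close> unfolding W_def by simp
    then show ?thesis
      using \<open>finite W\<close> b0(1) \<open>Qlt S ent b0 = Qle S ent t\<close> unfolding W_def[symmetric]
      by (simp add: sum.remove)
  qed
qed

text \<open>The rank of classes born at $b$ that are still alive in $L$.\<close>

definition born_rank :: "'a set set \<Rightarrow> ('a set \<Rightarrow> real) \<Rightarrow> real \<Rightarrow> 'a set set \<Rightarrow> int" where
  "born_rank S ent b L = int (hrank (Qle S ent b) L) - int (hrank (Qlt S ent b) L)"

text \<open>The defining alternating sum of a multiplicity is never negative, so the truncation by
  \<open>nat\<close> is harmless.\<close>

lemma mult_fin_eq:
  assumes "finite S" "b < d"
  shows "int (mult_fin S ent b d) = born_rank S ent b (Qlt S ent d) - born_rank S ent b (Qle S ent d)"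
proof -
  have "born_rank S ent b (Qle S ent d) \<le> born_rank S ent b (Qlt S ent d)"
    unfolding born_rank_def using assms
    by (intro hrank_diff_antimono Qlt_subset_Qle Qle_subset_Qlt finite_Qle order_refl)
  then show ?thesis
    unfolding mult_fin_def born_rank_def by simp
qed

lemma mult_inf_eq:
  assumes "finite S"
  shows "int (mult_inf S ent b) = born_rank S ent b S"
proof -
  have "hrank (Qlt S ent b) S \<le> hrank (Qle S ent b) S"
    using assms by (intro hrank_mono_left Qlt_subset_Qle Qle_subset order_refl)
  then show ?thesis
    unfolding mult_inf_def born_rank_def by simp
qed

lemma sum_deaths_after:
  assumes "finite S" "b \<le> a"
  shows "(\<Sum>d\<in>{d\<in>ent ` S. a < d}. int (mult_fin S ent b d)) + int (mult_inf S ent b)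
      = born_rank S ent b (Qle S ent a)"
proof -
  define M where "M = Max (insert a (ent ` S))"
  have "a \<le> M" "Qle S ent M = S" "{d\<in>ent ` S. a < d} = {d\<in>ent ` S. a < d \<and> d \<le> M}"
    unfolding M_def Qle_def using assms(1) by auto
  moreover have "(\<Sum>d\<in>{d\<in>ent ` S. a < d}. int (mult_fin S ent b d))
      = - (\<Sum>d\<in>{d\<in>ent ` S. a < d}. born_rank S ent b (Qle S ent d) - born_rank S ent b (Qlt S ent d))"
    using mult_fin_eq[OF assms(1)] assms(2) by (simp add: sum_negf[symmetric])
  ultimately show ?thesis
    using sum_level_jumps[OF assms(1) \<open>a \<le> M\<close>, of "born_rank S ent b"] mult_inf_eq[OF assms(1)]
    by simp
qed

lemma size_filter_mset_sum:
  "size (filter_mset Q (\<Sum>x\<in>A. f x)) = (\<Sum>x\<in>A. size (filter_mset Q (f x)))"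
  by (induction A rule: infinite_finite_induct) (auto simp: filter_union_mset)

lemma size_filter_replicate_mset:
  "size (filter_mset Q (replicate_mset n x)) = (if Q x then n else 0)"
  by (induction n) auto

lemma size_filter_PD:
  "size (filter_mset Q (PD S ent)) =
     (\<Sum>b\<in>ent ` S. \<Sum>d\<in>ent ` S. if b < d \<and> Q (b, ereal d) then mult_fin S ent b d else 0)
   + (\<Sum>b\<in>ent ` S. if Q (b, \<infinity>) then mult_inf S ent b else 0)"
  unfolding PD_def filter_union_mset size_union size_filter_mset_sum
  by (auto intro!: sum.cong simp: size_filter_replicate_mset)

lemma size_PD_alive:
  assumes "finite S" "t \<le> a"
  shows "int (size (filter_mset (\<lambda>p. t < fst p) (filter_mset (\<lambda>(b, d). b \<le> a \<and> ereal a < d) (PD S ent))))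
       = int (hrank (Qle S ent a) (Qle S ent a)) - int (hrank (Qle S ent t) (Qle S ent a))"
proof -
  define V where "V = ent ` S"
  define W where "W = {b\<in>V. t < b \<and> b \<le> a}"
  have "finite V"
    unfolding V_def using assms(1) by simp
  have inner: "(\<Sum>d\<in>V. if b < d \<and> (b \<le> a \<and> a < d) \<and> t < b then int (mult_fin S ent b d) else 0)
      = (if t < b \<and> b \<le> a then (\<Sum>d\<in>{d\<in>V. a < d}. int (mult_fin S ent b d)) else 0)" for b
    using \<open>finite V\<close> by (auto simp: sum.inter_filter intro!: sum.cong)
  have "int (size (filter_mset (\<lambda>p. t < fst p) (filter_mset (\<lambda>(b, d). b \<le> a \<and> ereal a < d) (PD S ent))))
      = (\<Sum>b\<in>V. \<Sum>d\<in>V. if b < d \<and> (b \<le> a \<and> a < d) \<and> t < b then int (mult_fin S ent b d) else 0)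
        + (\<Sum>b\<in>V. if b \<le> a \<and> t < b then int (mult_inf S ent b) else 0)"
    unfolding filter_filter_mset size_filter_PD V_def by (simp add: of_nat_sum if_distrib cong: if_cong)
  also have "\<dots> = (\<Sum>b\<in>W. (\<Sum>d\<in>{d\<in>V. a < d}. int (mult_fin S ent b d)) + int (mult_inf S ent b))"
    unfolding inner W_def sum.inter_filter[OF \<open>finite V\<close>, symmetric]
    by (simp add: sum.distrib conj_commute conj_left_commute)
  also have "\<dots> = (\<Sum>b\<in>W. born_rank S ent b (Qle S ent a))"
    unfolding V_def W_def by (intro sum.cong refl sum_deaths_after[OF assms(1)]) auto
  also have "\<dots> = int (hrank (Qle S ent a) (Qle S ent a)) - int (hrank (Qle S ent t) (Qle S ent a))"
    unfolding W_def V_def born_rank_def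
    by (rule sum_level_jumps[OF assms, of "\<lambda>K. int (hrank K (Qle S ent a))"])
  finally show ?thesis .
qed


section \<open>Comparing total lengths level by level\<close>

lemma Max_mset_le_by_tail_counts:
  fixes X Y :: "real multiset"
  assumes "Y \<noteq> {#}"
    and tails: "\<forall>t. size (filter_mset (\<lambda>y. t < y) Y) \<le> size (filter_mset (\<lambda>x. t < x) X)"
  shows "X \<noteq> {#}" "Max_mset Y \<le> Max_mset X"
proof -
  have tail_nonempty: "filter_mset (\<lambda>z. t < z) X \<noteq> {#}" if "t < Max_mset Y" for t
  proof -
    have "Max_mset Y \<in># filter_mset (\<lambda>z. t < z) Y"
      using that assms(1) by simp
    then have "0 < size (filter_mset (\<lambda>z. t < z) Y)"
      by (metis empty_iff nonempty_has_size set_mset_empty)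
    then show ?thesis
      using tails by (metis less_le_not_le size_empty)
  qed
  show "X \<noteq> {#}"
    using tail_nonempty[of "Max_mset Y - 1"] by auto
  show "Max_mset Y \<le> Max_mset X"
  proof (rule ccontr)
    assume "\<not> Max_mset Y \<le> Max_mset X"
    then have "filter_mset (\<lambda>z. Max_mset X < z) X \<noteq> {#}"
      by (intro tail_nonempty) simp
    then show False
      by (auto simp: filter_mset_eq_conv not_less)
  qed
qed

text \<open>A layer-cake argument: remove the maxima $y \le x$ of $Y$ and $X$ and induct.\<close>

lemma sum_mset_le_by_tail_counts:
  fixes X Y :: "real multiset"
  assumes "\<forall>x\<in>#X. 0 \<le> x"
    and "\<forall>t. size (filter_mset (\<lambda>y. t < y) Y) \<le> size (filter_mset (\<lambda>x. t < x) X)"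
  shows "sum_mset Y \<le> sum_mset X"
  using assms
proof (induction "size Y" arbitrary: X Y rule: less_induct)
  case less
  show ?case
  proof (cases "Y = {#}")
    case True
    then show ?thesis
      using less.prems(1) sum_mset_mono[of X "\<lambda>_. 0" "\<lambda>x. x"] by simp
  next
    case False
    define y x where "y = Max_mset Y" and "x = Max_mset X"
    have "X \<noteq> {#}" "y \<le> x"
      unfolding x_def y_def using Max_mset_le_by_tail_counts[OF False less.prems(2)] by simp_all
    then have y: "y \<in># Y" "\<And>z. z \<in># Y \<Longrightarrow> z \<le> y" and x: "x \<in># X"
      unfolding x_def y_def using False by auto
    obtain Y' X' where Y': "Y = add_mset y Y'" and X': "X = add_mset x X'"
      using y(1) x by (metis insert_DiffM)
    have "size (filter_mset (\<lambda>z. t < z) Y') \<le> size (filter_mset (\<lambda>z. t < z) X')" for t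
    proof (cases "t < y")
      case True
      have "size (filter_mset (\<lambda>z. t < z) (add_mset y Y')) \<le> size (filter_mset (\<lambda>z. t < z) (add_mset x X'))"
        using less.prems(2) unfolding X' Y' by blast
      then show ?thesis
        using True \<open>y \<le> x\<close> by simp
    next
      case False
      then have empty: "filter_mset (\<lambda>z. t < z) Y' = {#}"
        using y(2) unfolding Y' by (auto simp: filter_mset_eq_conv not_less intro: order_trans)
      show ?thesis
        by (simp only: empty size_empty le0)
    qed
    then have "sum_mset Y' \<le> sum_mset X'"
      using less.hyps[of Y' X'] less.prems(1) unfolding X' Y' by simp
    then show ?thesis
      unfolding X' Y' using \<open>y \<le> x\<close> by simp
  qed
qed

lemma size_filter_image_mset_set:
  assumes "finite A"
  shows "size (filter_mset P (image_mset f (mset_set A))) = card {x\<in>A. P (f x)}"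
  unfolding filter_mset_image_mset size_image_mset filter_mset_mset_set[OF assms] by simp

lemma total_len_eq_sum_mset: "total_len ent E = 2 * sum_mset (image_mset ent (mset_set E))"
  unfolding total_len_def elen_def sum_unfold_sum_mset[symmetric] by (simp add: sum_distrib_left)


section \<open>The spanning graph and the minimum spanning tree above a level\<close>

lemma graph_cx_edges: "graph_on C G \<Longrightarrow> edges (graph_cx C G) = G"
  unfolding edges_def graph_cx_def graph_on_def by auto

lemma graph_cx_boundaries:
  assumes "graph_on C G"
  shows "boundaries (graph_cx C G) = {{}}"
proof -
  have "triangles (graph_cx C G) = {}"
    using assms unfolding triangles_def graph_cx_def graph_on_def by auto
  then show ?thesis
    unfolding boundaries_def by (simp add: bd2_def)
qed

lemma H1_graph_cx:
  assumes "graph_on C G"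
  shows "H1 (graph_cx C G) = (\<lambda>c. {c}) ` cycle_space G"
proof -
  have "hclass (graph_cx C G) c = {c}" if "c \<in> cycle_space G" for c
    using that unfolding hclass_def cycles_eq_cycle_space graph_cx_edges[OF assms]
      graph_cx_boundaries[OF assms] by (auto simp: symdiff_eq_iff)
  then show ?thesis
    unfolding H1_def cycles_eq_cycle_space graph_cx_edges[OF assms] by simp
qed

lemma card_H1:
  assumes "finite L"
  shows "card (H1 L) = 2 ^ hrank L L"
proof -
  have "H1 L = coset (bounding_cycles L) ` cycles L"
    unfolding H1_def using hclass_eq_coset[OF assms] by (rule image_cong[OF refl])
  then have "induced L L ` H1 L = H1 L"
    using induced_image[OF order_refl assms] by simp
  then show ?thesis
    using card_induced_image(1)[OF order_refl assms] by simp
qed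

lemma dimZ2_cycle_space_iso:
  assumes "finite L" "graph_on C G"
    and iso: "bij_betw (induced (graph_cx C G) L) (H1 (graph_cx C G)) (H1 L)"
  shows "dimZ2 (cycle_space G) = hrank L L"
proof (rule dimZ2_eq)
  have "card (cycle_space G) = card (H1 (graph_cx C G))"
    unfolding H1_graph_cx[OF assms(2)] by (simp add: card_image)
  also have "\<dots> = card (H1 L)"
    using iso by (rule bij_betw_same_card)
  finally show "card (cycle_space G) = 2 ^ hrank L L"
    using card_H1[OF assms(1)] by simp
qed

lemma inj_on_coset_iso:
  assumes "finite L" "graph_on C G" "G \<subseteq> edges L"
    and iso: "bij_betw (induced (graph_cx C G) L) (H1 (graph_cx C G)) (H1 L)"
  shows "inj_on (coset (bounding_cycles L)) (cycle_space G)"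
proof (rule inj_onI)
  fix c1 c2 assume c: "c1 \<in> cycle_space G" "c2 \<in> cycle_space G"
    and eq: "coset (bounding_cycles L) c1 = coset (bounding_cycles L) c2"
  have "induced (graph_cx C G) L {c} = coset (bounding_cycles L) c" if "c \<in> cycle_space G" for c
    using that cycle_space_mono[OF assms(3)] hclass_eq_coset[OF assms(1)]
    unfolding induced_def cycles_eq_cycle_space by auto
  then have "induced (graph_cx C G) L {c1} = induced (graph_cx C G) L {c2}"
    using c eq by simp
  moreover have "{c1} \<in> H1 (graph_cx C G)" "{c2} \<in> H1 (graph_cx C G)"
    using c H1_graph_cx[OF assms(2)] by auto
  ultimately show "c1 = c2"
    using iso unfolding bij_betw_def inj_on_def by blast
qed

lemma dimZ2_cycle_space_le_hrank:
  assumes "finite L" "K \<subseteq> L" "F \<subseteq> edges K"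
    and inj: "inj_on (coset (bounding_cycles L)) (cycle_space F)"
  shows "dimZ2 (cycle_space F) \<le> hrank K L"
proof -
  have "finite K"
    using finite_subset[OF assms(2,1)] .
  then have "finite F"
    using finite_subset[OF assms(3)] unfolding edges_def by simp
  have sub: "cycle_space F \<subseteq> cycles K"
    unfolding cycles_eq_cycle_space using assms(3) by (rule cycle_space_mono)
  have "card (cycle_space F) = card (coset (bounding_cycles L) ` cycle_space F)"
    using card_image[OF inj] by simp
  also have "\<dots> \<le> card (coset (bounding_cycles L) ` cycles K)"
    using sub finite_cycles[OF \<open>finite K\<close>] by (intro card_mono) auto
  also have "\<dots> = 2 ^ hrank K L"
    using card_induced_image(1)[OF assms(2,1)] induced_image[OF assms(2,1)] by simp
  finally have "(2::nat) ^ dimZ2 (cycle_space F) \<le> 2 ^ hrank K L"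
    using card_z2_subspace[OF z2_subspace_cycle_space[OF \<open>finite F\<close>] finite_cycle_space[OF \<open>finite F\<close>]]
    by simp
  then show ?thesis
    by simp
qed

text \<open>Euler's formula for $G$ and for its edges entering by scale $t$, whose cycles still inject
  into $H_1(Q(C;\alpha))$.\<close>

lemma spanning_graph_card_above:
  assumes filt: "filtration C S ent" and span: "spans C G (Qle S ent \<alpha>)"
    and iso: "bij_betw (induced (graph_cx C G) (Qle S ent \<alpha>)) (H1 (graph_cx C G)) (H1 (Qle S ent \<alpha>))"
    and "t \<le> \<alpha>"
  shows "int (hrank (Qle S ent \<alpha>) (Qle S ent \<alpha>)) - int (hrank (Qle S ent t) (Qle S ent \<alpha>))
      + int (card (comps C (edges (Qle S ent t)))) - int (card (comps C (edges (Qle S ent \<alpha>))))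
      \<le> int (card {e\<in>G. t < ent e})"
proof -
  define Qa Qt Gt where "Qa = Qle S ent \<alpha>" and "Qt = Qle S ent t" and "Gt = {e\<in>G. ent e \<le> t}"
  have fC: "finite C" and fQa: "finite Qa"
    using filtrationD[OF filt] unfolding Qa_def by (auto intro: finite_Qle)
  have g: "graph_on C G" "graph_on C Gt" and GQa: "G \<subseteq> Qa"
    using span unfolding spans_def Qa_def Gt_def graph_on_def by auto
  have GE: "G \<subseteq> edges Qa" and GtE: "Gt \<subseteq> edges Qt"
    using g(1) GQa unfolding graph_on_def edges_def Qa_def Qt_def Gt_def Qle_def by auto
  have "finite G"
    by (rule graph_on_finite[OF fC g(1)])
  have comps_G: "card (comps C G) = card (comps C (edges Qa))"
    using span unfolding spans_def Qa_def by (meson bij_betw_same_card)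
  have "card G + card (comps C G) = hrank Qa Qa + card C"
    using cycle_rank[OF fC g(1)] dimZ2_cycle_space_iso[OF fQa g(1) iso[folded Qa_def]] by simp
  moreover have "card Gt + card (comps C Gt) \<le> hrank Qt Qa + card C"
  proof -
    have "inj_on (coset (bounding_cycles Qa)) (cycle_space Gt)"
      using inj_on_coset_iso[OF fQa g(1) GE iso[folded Qa_def]] cycle_space_mono[of Gt G]
      unfolding Gt_def by (blast intro: inj_on_subset)
    then have "dimZ2 (cycle_space Gt) \<le> hrank Qt Qa"
      using fQa GtE Qle_mono[OF \<open>t \<le> \<alpha>\<close>] unfolding Qa_def Qt_def
      by (intro dimZ2_cycle_space_le_hrank)
    then show ?thesis
      using cycle_rank[OF fC g(2)] by simp
  qed
  moreover have "card (comps C (edges Qt)) \<le> card (comps C Gt)"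
    using GtE by (intro card_comps_le[OF fC]) (auto intro: conn_edge)
  moreover have "card {e\<in>G. t < ent e} = card G - card Gt" "card Gt \<le> card G"
    using \<open>finite G\<close> unfolding Gt_def
    by (auto simp: card_Diff_subset[symmetric] intro: card_mono arg_cong[where f = card])
  ultimately show ?thesis
    unfolding Qa_def Qt_def comps_G by linarith
qed

lemma card_MST_trunc_above:
  assumes filt: "filtration C S ent" and mst: "is_MST C S ent T" and "t \<le> \<alpha>"
  shows "card {e\<in>MST_trunc ent T \<alpha>. t < ent e} + card (comps C (edges (Qle S ent \<alpha>)))
      = card (comps C (edges (Qle S ent t)))"
proof -
  have "finite T"
    using mst graph_on_finite filtrationD(1)[OF filt] unfolding is_MST_def is_tree_def by blast
  have "{e\<in>MST_trunc ent T \<alpha>. t < ent e} = {e\<in>T. ent e \<le> \<alpha>} - {e\<in>T. ent e \<le> t}"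
    unfolding MST_trunc_def elen_def by auto
  moreover have "{e\<in>T. ent e \<le> t} \<subseteq> {e\<in>T. ent e \<le> \<alpha>}"
    using \<open>t \<le> \<alpha>\<close> by auto
  ultimately have "card {e\<in>MST_trunc ent T \<alpha>. t < ent e} + card {e\<in>T. ent e \<le> t} = card {e\<in>T. ent e \<le> \<alpha>}"
    using \<open>finite T\<close> by (simp add: card_Diff_subset card_mono)
  then show ?thesis
    using card_MST_level[OF filt mst, of t] card_MST_level[OF filt mst, of \<alpha>] by linarith
qed

lemma level_count:
  assumes filt: "filtration C S ent" and span: "spans C G (Qle S ent \<alpha>)"
    and iso: "bij_betw (induced (graph_cx C G) (Qle S ent \<alpha>)) (H1 (graph_cx C G)) (H1 (Qle S ent \<alpha>))"
    and mst: "is_MST C S ent T"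
  shows "card {e\<in>MST_trunc ent T \<alpha>. t < ent e}
      + size (filter_mset (\<lambda>p. t < fst p) (filter_mset (\<lambda>(b, d). b \<le> \<alpha> \<and> ereal \<alpha> < d) (PD S ent)))
      \<le> card {e\<in>G. t < ent e}"
proof (cases "t \<le> \<alpha>")
  case True
  then show ?thesis
    using spanning_graph_card_above[OF filt span iso True] card_MST_trunc_above[OF filt mst True]
      size_PD_alive[OF filtrationD(2)[OF filt] True, of ent] by linarith
next
  case False
  then have empty: "{e\<in>MST_trunc ent T \<alpha>. t < ent e} = {}"
    "filter_mset (\<lambda>p. t < fst p) (filter_mset (\<lambda>(b, d). b \<le> \<alpha> \<and> ereal \<alpha> < d) (PD S ent)) = {#}"
    unfolding MST_trunc_def elen_def by (auto simp: filter_mset_eq_conv)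
  show ?thesis
    by (simp only: empty card.empty size_empty add_0 le0)
qed

theorem mainTheorem8:
  fixes C :: "'a set" and S G T :: "'a set set" and ent :: "'a set \<Rightarrow> real" and \<alpha> :: real
  assumes filt: "filtration C S ent"
    and alpha: "0 \<le> \<alpha>"
    and span: "spans C G (Qle S ent \<alpha>)"
    and iso: "bij_betw (induced (graph_cx C G) (Qle S ent \<alpha>)) (H1 (graph_cx C G)) (H1 (Qle S ent \<alpha>))"
    and mst: "is_MST C S ent T"
  shows "total_len ent G \<ge> total_len ent (MST_trunc ent T \<alpha>)
           + 2 * (\<Sum>p\<in>#filter_mset (\<lambda>(b, d). b \<le> \<alpha> \<and> ereal \<alpha> < d) (PD S ent). fst p)"
proof -
  define M where "M = filter_mset (\<lambda>(b, d). b \<le> \<alpha> \<and> ereal \<alpha> < d) (PD S ent)"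
  define MT where "MT = MST_trunc ent T \<alpha>"
  have "finite G" "finite MT"
    using span mst graph_on_finite[OF filtrationD(1)[OF filt]]
    unfolding spans_def is_MST_def is_tree_def MT_def MST_trunc_def by auto
  have "sum_mset (image_mset ent (mset_set MT) + image_mset fst M) \<le> sum_mset (image_mset ent (mset_set G))"
  proof (rule sum_mset_le_by_tail_counts)
    show "\<forall>x\<in>#image_mset ent (mset_set G). 0 \<le> x"
      using span filtrationD(4)[OF filt] \<open>finite G\<close> unfolding spans_def Qle_def by auto
    show "\<forall>t. size (filter_mset (\<lambda>y. t < y) (image_mset ent (mset_set MT) + image_mset fst M))
        \<le> size (filter_mset (\<lambda>x. t < x) (image_mset ent (mset_set G)))"
      using level_count[OF filt span iso mst] unfolding MT_def M_def
      by (simp add: size_filter_image_mset_set \<open>finite G\<close> \<open>finite MT\<close>[unfolded MT_def]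
          filter_mset_image_mset)
  qed
  then show ?thesis
    unfolding total_len_eq_sum_mset MT_def M_def by simp
qed

end
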